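(* (i) For every Brjuno number $x\in(0,\tfrac12)$, $$\Delta^-(x)=\sum_{i=0}^{\infty}(-1)^i\,\beta_{i-1}(x)\,\tilde f(\varepsilon_i x_i).$$ (ii) The series $\sum_{i\ge0}(-1)^i\beta_{i-1}(x)\tilde f(\varepsilon_ix_i)$ converges uniformly on $(0,\tfrac12)\setminus\mathbf{Q}$. (iii) For each integer $M\ge1$, let $\Delta^-_M(x)=\sum_{i=0}^{M}(-1)^i\beta_{i-1}(x)\tilde f(\varepsilon_ix_i)$ for irrational $x\in(0,\tfrac12)$. Then $\Delta^-_M$ is continuous on $(0,\tfrac12)\setminus\mathbf{Q}$ and has a limit (taken through irrationals) at every rational point of $(0,\tfrac12)$ of depth greater than $M$; at every rational $p/q\in(0,\tfrac12)$ in lowest terms of depth at most $M$, the one-sided limits of $\Delta^-_M$ through irrationals exist and satisfy $$\lim_{x\to(p/q)^+}\Delta^-_M(x)-\lim_{x\to(p/q)^-}\Delta^-_M(x)=\frac{2}{q}.$$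
   Context: Nearest-integer continued fraction: $A_{1/2}(y)=\bigl|\tfrac1y-\lfloor\tfrac1y+\tfrac12\rfloor\bigr|$ for $y\in(0,\tfrac12]$, mapping into $[0,\tfrac12]$. For irrational $x\in(0,\tfrac12)$ set $x_0=x$, $\varepsilon_0=1$, and for $i\ge1$: $a_i=\lfloor 1/x_{i-1}+\tfrac12\rfloor$, $\varepsilon_i=\operatorname{sgn}(1/x_{i-1}-a_i)\in\{\pm1\}$, $x_i=\varepsilon_i(1/x_{i-1}-a_i)=A_{1/2}(x_{i-1})\in(0,\tfrac12)$. Put $\beta_{-1}(x)=1$ and $\beta_i(x)=\prod_{k=0}^{i}\varepsilon_kx_k$. The depth of a rational $r\in(0,\tfrac12)$ is the least $i\ge1$ with $A_{1/2}^i(r)=0$. Let $A(y)=1/y-\lfloor1/y\rfloor$ (Gauss map). Define $w$ on irrationals $y\in(0,\tfrac12)$ by $w(y)=\frac y2\log\frac{1-y}{y}-\log(1-y)$, extended to all irrationals as an even $1$-periodic function. For irrational $x\in(0,\tfrac12)$ with $n=\lfloor1/x\rfloor$ let $\Phi(x)=x\log x+xA(x)\log(xA(x))+x\sum_{j=1}^{n-1}\log(1-jx)$ and $f(x)=-w(x)-xw(A(x))-\Phi(x)$; $\tilde f$ is the odd $1$-periodic extension of $f$ to $\mathbf{R}\setminus\mathbf{Q}$ ($\tilde f(x)=f(\{x\})$ if $\{x\}\in(0,\tfrac12)$, $\tilde f(x)=-f(1-\{x\})$ if $\{x\}\in(\tfrac12,1)$). Brjuno/Wilton/semi-Brjuno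 functions: for irrational $x$ with $y=\{x\}$, $A_0(y)=\lfloor1/y+1\rfloor-1/y$, $B(x)=\sum_{j\ge0}(\prod_{k<j}A^k(y))\log\frac1{A^j(y)}$, $B_0(x)=\sum_{j\ge0}(\prod_{k<j}A_0^k(y))\log\frac1{A_0^j(y)}$, $W(x)=\sum_{j\ge0}(-1)^j(\prod_{k<j}A^k(y))\log\frac1{A^j(y)}$. $x$ is Brjuno if $B(x)<\infty$ (then $B_0(\pm x)<\infty$ and $W(\pm x)$ converge). For Brjuno $x$: $\Delta^-(x)=\tfrac12(W(x)-W(-x))-(B_0(x)-B_0(-x))$. Known facts usable here: $w=W^+$ (even part of $W$), and for Brjuno $x\in(0,\tfrac12)$ one has $\Phi(x)=xB_0(A(x))-B_0(1-x)$; $\Delta^-$ is odd and $1$-periodic and satisfies $\Delta^-(x)=f(x)-x\Delta^-(A(x))$ for Brjuno $x\in(0,\tfrac12)$. *)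

theory Defs
  imports "HOL-Analysis.Analysis"
begin

definition A_half :: "real \<Rightarrow> real" where
  "A_half y = \<bar>1 / y - of_int \<lfloor>1 / y + 1/2\<rfloor>\<bar>"

definition nicf_x :: "real \<Rightarrow> nat \<Rightarrow> real" where
  "nicf_x x i = (A_half ^^ i) x"

definition nicf_a :: "real \<Rightarrow> nat \<Rightarrow> int" where
  "nicf_a x i = \<lfloor>1 / nicf_x x (i - 1) + 1/2\<rfloor>"

definition nicf_eps :: "real \<Rightarrow> nat \<Rightarrow> real" where
  "nicf_eps x i = (if i = 0 then 1
                   else sgn (1 / nicf_x x (i - 1) - of_int (nicf_a x i)))"

text \<open>beta_shift x i = beta_{i-1}(x) = prod_{k=0}^{i-1} eps_k x_k (so beta_shift x 0 = beta_{-1} = 1).\<close>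
definition beta_shift :: "real \<Rightarrow> nat \<Rightarrow> real" where
  "beta_shift x i = (\<Prod>k<i. nicf_eps x k * nicf_x x k)"

definition nicf_depth :: "real \<Rightarrow> nat" where
  "nicf_depth r = (LEAST i. i \<ge> 1 \<and> (A_half ^^ i) r = 0)"

definition gaussA :: "real \<Rightarrow> real" where
  "gaussA y = 1 / y - of_int \<lfloor>1 / y\<rfloor>"

definition gaussA0 :: "real \<Rightarrow> real" where
  "gaussA0 y = of_int \<lfloor>1 / y + 1\<rfloor> - 1 / y"

definition B_term :: "real \<Rightarrow> nat \<Rightarrow> real" where
  "B_term x j = (\<Prod>k<j. (gaussA ^^ k) (frac x)) * ln (1 / (gaussA ^^ j) (frac x))"

definition B0_term :: "real \<Rightarrow> nat \<Rightarrow> real" where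
  "B0_term x j = (\<Prod>k<j. (gaussA0 ^^ k) (frac x)) * ln (1 / (gaussA0 ^^ j) (frac x))"

definition W_term :: "real \<Rightarrow> nat \<Rightarrow> real" where
  "W_term x j = (-1) ^ j * (\<Prod>k<j. (gaussA ^^ k) (frac x)) * ln (1 / (gaussA ^^ j) (frac x))"

definition brjunoB :: "real \<Rightarrow> real" where "brjunoB x = (\<Sum>j. B_term x j)"
definition brjunoB0 :: "real \<Rightarrow> real" where "brjunoB0 x = (\<Sum>j. B0_term x j)"
definition wiltonW :: "real \<Rightarrow> real" where "wiltonW x = (\<Sum>j. W_term x j)"

text \<open>x is a Brjuno number: irrational with B(x) < \<infinity> (the terms are nonnegative).\<close>
definition brjuno :: "real \<Rightarrow> bool" where
  "brjuno x \<longleftrightarrow> x \<notin> \<rat> \<and> summable (B_term x)"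

definition Delta_minus :: "real \<Rightarrow> real" where
  "Delta_minus x = (wiltonW x - wiltonW (- x)) / 2 - (brjunoB0 x - brjunoB0 (- x))"

text \<open>w: on (0,1/2) given by the formula, extended evenly and 1-periodically.\<close>
definition w0 :: "real \<Rightarrow> real" where
  "w0 y = y / 2 * ln ((1 - y) / y) - ln (1 - y)"

definition w_fun :: "real \<Rightarrow> real" where
  "w_fun y = (if frac y < 1/2 then w0 (frac y) else w0 (1 - frac y))"

definition Phi :: "real \<Rightarrow> real" where
  "Phi x = x * ln x + x * gaussA x * ln (x * gaussA x)
           + x * (\<Sum>j=1..nat \<lfloor>1 / x\<rfloor> - 1. ln (1 - real j * x))"

definition f_fun :: "real \<Rightarrow> real" where
  "f_fun x = - w_fun x - x * w_fun (gaussA x) - Phi x"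

text \<open>Odd 1-periodic extension of f.\<close>
definition f_tilde :: "real \<Rightarrow> real" where
  "f_tilde x = (if frac x < 1/2 then f_fun (frac x) else - f_fun (1 - frac x))"

definition dterm :: "real \<Rightarrow> nat \<Rightarrow> real" where
  "dterm x i = (-1) ^ i * beta_shift x i * f_tilde (nicf_eps x i * nicf_x x i)"

definition DeltaM :: "nat \<Rightarrow> real \<Rightarrow> real" where
  "DeltaM M x = (\<Sum>i\<le>M. dterm x i)"

end

theory Submission
  imports Defs
begin

(* The partial sums are handled through their Horner form DeltaM_odd, defined for signed arguments by
   DeltaM_odd (m+1) y = f~(y) - y DeltaM_odd m (nicf_step y); here nicf_step y = round_rem (1/|y|)
   generates the signed orbit eps_k x_k of the nearest-integer continued fraction.

   (i) Following the Brjuno, semi-Brjuno and Wilton series along the Gauss map and under x -> 1 - x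
   gives the functional equation Delta(x) = f(x) - x Delta(A x); for B_0(1 - x) the map A_0 runs
   through floor(1/x) explicit steps whose contribution telescopes to x ln(1/A x) - Phi(x).
   Transported to the signed orbit, the equation shows that the remainder after N terms is
   +- beta_(N-1) Delta(eps_N x_N).  Each nearest-integer step is one or two Gauss steps, so this
   remainder is O(2^-N) plus a tail of the convergent Brjuno series of x.

   (ii) The i-th term is bounded by 5 * 2^-i.

   (iii) By induction on m: f~ is continuous off the integers, where it jumps by 2, and near any r > 0
   nicf_step is a Moebius map, continuous from both sides unless 1/r is a half-integer.  So a jump of
   DeltaM_odd m at A_half r = p'/p becomes a jump of r times it at r = p/q while the depth drops by
   one; when 1/r is a half-integer the two sides see DeltaM_odd m near 1/2 and near -1/2. *)

definition xlnx :: "real \<Rightarrow> real" where "xlnx t = t * ln t"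

lemma abs_xlnx_le_sqrt:
  fixes t :: real assumes "0 \<le> t" "t \<le> 1" shows "\<bar>xlnx t\<bar> \<le> 2 * sqrt t"
proof (cases "t = 0")
  case False
  hence t: "t > 0" using assms by simp
  have "ln (1 / sqrt t) \<le> 1 / sqrt t - 1" using t by (intro ln_le_minus_one) simp
  moreover have "ln (1 / sqrt t) = - ln t / 2" using t by (simp add: ln_div ln_sqrt)
  ultimately have "- ln t \<le> 2 / sqrt t" by (simp add: field_simps)
  hence "t * (- ln t) \<le> t * (2 / sqrt t)" using t by (intro mult_left_mono) auto
  also have "t * (2 / sqrt t) = 2 * sqrt t"
    using t by (metis real_div_sqrt times_divide_eq_right mult.commute less_imp_le)
  finally have "- (t * ln t) \<le> 2 * sqrt t" by simp
  moreover have "t * ln t \<le> 0" using assms t by (simp add: mult_nonneg_nonpos)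
  ultimately show ?thesis unfolding xlnx_def by simp
qed (simp add: xlnx_def)

lemma abs_xlnx_le_half:
  fixes t :: real assumes "0 \<le> t" "t \<le> 1" shows "\<bar>xlnx t\<bar> \<le> 1/2"
proof (cases "t = 0")
  case False
  hence t: "t > 0" using assms by simp
  have "ln (1 / (2*t)) \<le> 1 / (2*t) - 1" using t by (intro ln_le_minus_one) simp
  moreover have "ln (1 / (2*t)) = - ln 2 - ln t" using t by (simp add: ln_div ln_mult)
  moreover have "ln (2::real) < 1" by (rule ln_2_less_1)
  ultimately have "- ln t \<le> 1/(2*t)" by simp
  hence "t * (- ln t) \<le> t * (1/(2*t))" using t by (intro mult_left_mono) auto
  hence "- (t * ln t) \<le> 1/2" using t by simp
  moreover have "t * ln t \<le> 0" using assms t by (simp add: mult_nonneg_nonpos)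
  ultimately show ?thesis unfolding xlnx_def by simp
qed (simp add: xlnx_def)

lemma abs_ln_one_minus_le:
  fixes t :: real assumes "0 \<le> t" "t \<le> 1/2" shows "\<bar>ln (1 - t)\<bar> \<le> 2 * t"
proof -
  have p: "1 - t > 0" using assms by simp
  have "ln (1 / (1 - t)) \<le> 1 / (1 - t) - 1" using p by (intro ln_le_minus_one) simp
  moreover have "ln (1 / (1 - t)) = - ln (1 - t)" using p by (simp add: ln_div)
  moreover have "1 / (1 - t) - 1 \<le> 2 * t"
  proof -
    have "0 \<le> t * (1 - 2*t)" using assms by (intro mult_nonneg_nonneg) auto
    thus ?thesis using p by (simp add: field_simps)
  qed
  moreover have "ln (1 - t) \<le> 0" using assms by simp
  ultimately show ?thesis by linarith
qed

lemma isCont_xlnx: "isCont xlnx t"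
proof (cases "t = 0")
  case False thus ?thesis unfolding xlnx_def by (intro continuous_intros) auto
next
  case True
  have "\<forall>\<^sub>F y in at (0::real). norm (xlnx y) \<le> 2 * sqrt \<bar>y\<bar>"
  proof -
    have "\<forall>\<^sub>F y in at (0::real). y \<in> ball 0 1 \<and> y \<in> UNIV" by (rule eventually_at_ball) simp
    then show ?thesis
    proof (rule eventually_mono)
      fix y :: real assume "y \<in> ball 0 1 \<and> y \<in> UNIV"
      hence "\<bar>xlnx \<bar>y\<bar>\<bar> \<le> 2 * sqrt \<bar>y\<bar>" by (intro abs_xlnx_le_sqrt) (auto simp: dist_norm)
      moreover have "ln y = ln \<bar>y\<bar>" by (cases "y \<ge> 0") (auto simp: ln_minus)
      ultimately show "norm (xlnx y) \<le> 2 * sqrt \<bar>y\<bar>" by (simp add: xlnx_def abs_mult)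
    qed
  qed
  moreover have "((\<lambda>y. 2 * sqrt \<bar>y\<bar>) \<longlongrightarrow> 2 * sqrt \<bar>0\<bar>) (at (0::real))"
    by (intro tendsto_intros)
  hence "((\<lambda>y. 2 * sqrt \<bar>y\<bar>) \<longlongrightarrow> 0) (at (0::real))" by simp
  ultimately have "(xlnx \<longlongrightarrow> 0) (at 0)" by (rule Lim_null_comparison)
  thus ?thesis using True unfolding isCont_def xlnx_def by simp
qed

lemma continuous_xlnx [continuous_intros]:
  "continuous (at x within s) f \<Longrightarrow> continuous (at x within s) (\<lambda>x. xlnx (f x))"
  by (rule continuous_within_compose3[OF isCont_xlnx])

definition round_rem :: "real \<Rightarrow> real" where "round_rem t = t - of_int (round t)"

lemma abs_round_rem_le: "\<bar>round_rem t\<bar> \<le> 1/2"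
  unfolding round_rem_def using of_int_round_abs_le[of t] by linarith

lemma round_rem_add_of_int: "round_rem (t + of_int k) = round_rem t"
proof -
  have "round (t + of_int k) = round t + k" unfolding round_def
    by (metis add.commute add.left_commute floor_add_int)
  thus ?thesis unfolding round_rem_def by simp
qed

lemma abs_round_rem_eq_frac: "\<bar>round_rem y\<bar> = (if frac y < 1/2 then frac y else 1 - frac y)"
  unfolding round_rem_def round_altdef using frac_lt_1[of y] frac_ge_0[of y]
  by (auto simp: frac_def ceiling_altdef)

lemma A_half_eq_abs_round_rem: "A_half z = \<bar>round_rem (1 / z)\<bar>"
  unfolding A_half_def round_rem_def round_def by simp

text \<open>\<open>\<bar>round_rem t\<bar>\<close> is the distance from \<open>t\<close> to \<open>\<int>\<close>, hence 1-Lipschitz.\<close>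

lemma isCont_abs_round_rem: "isCont (\<lambda>t. \<bar>round_rem t\<bar>) t0"
proof -
  have le: "\<bar>round_rem s\<bar> - \<bar>round_rem t\<bar> \<le> \<bar>s - t\<bar>" for s t
    using round_diff_minimal[of s "round t"] unfolding round_rem_def by linarith
  have "1-lipschitz_on UNIV (\<lambda>t. \<bar>round_rem t\<bar>)"
  proof (intro lipschitz_onI)
    fix s t :: real
    show "dist \<bar>round_rem s\<bar> \<bar>round_rem t\<bar> \<le> 1 * dist s t"
      using le[of s t] le[of t s] by (simp add: dist_real_def abs_minus_commute abs_le_iff)
  qed simp
  thus ?thesis using lipschitz_on_continuous_within by blast
qed

section \<open>The functions \<open>w\<close>, \<open>\<Phi>\<close> and \<open>f\<close>\<close>

text \<open>A form of \<open>w0\<close> continuous on \<open>(-\<infinity>, 1)\<close>, in particular at \<open>0\<close>.\<close>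

definition w0_ext :: "real \<Rightarrow> real" where
  "w0_ext y = (y * ln (1 - y) - xlnx y) / 2 - ln (1 - y)"

lemma w0_eq_w0_ext: assumes "0 \<le> y" "y \<le> 1/2" shows "w0 y = w0_ext y"
proof (cases "y = 0")
  case False
  hence "ln ((1 - y) / y) = ln (1 - y) - ln y" using assms by (simp add: ln_div)
  hence "w0 y = y / 2 * (ln (1 - y) - ln y) - ln (1 - y)" unfolding w0_def by simp
  thus ?thesis unfolding w0_ext_def xlnx_def by (simp add: field_simps)
qed (simp add: w0_def w0_ext_def xlnx_def)

lemma w_fun_eq_w0_abs_round_rem: "w_fun y = w0 \<bar>round_rem y\<bar>"
  unfolding w_fun_def abs_round_rem_eq_frac by simp

lemma isCont_w_fun: "isCont w_fun y"
proof -
  have "isCont (\<lambda>t. w0_ext \<bar>round_rem t\<bar>) y"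
    using abs_round_rem_le[of y]
    by (intro continuous_at_compose[OF isCont_abs_round_rem, unfolded o_def])
      (auto simp: w0_ext_def intro!: continuous_intros)
  moreover have "w_fun = (\<lambda>t. w0_ext \<bar>round_rem t\<bar>)"
    using w0_eq_w0_ext abs_round_rem_le by (auto simp: w_fun_eq_w0_abs_round_rem)
  ultimately show ?thesis by simp
qed

lemma continuous_w_fun [continuous_intros]:
  "continuous (at x within s) f \<Longrightarrow> continuous (at x within s) (\<lambda>x. w_fun (f x))"
  by (rule continuous_within_compose3[OF isCont_w_fun])

lemma w_fun_add_of_int: "w_fun (y + of_int k) = w_fun y"
  unfolding w_fun_eq_w0_abs_round_rem round_rem_add_of_int ..

lemma w_fun_eq_w0: assumes "0 \<le> z" "z \<le> 1/2" shows "w_fun z = w0 z"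
proof (cases "z < 1/2")
  case True thus ?thesis using assms by (simp add: w_fun_def frac_eq)
next
  case False
  hence z: "z = 1/2" using assms by simp
  show ?thesis unfolding z by (simp add: w_fun_def frac_eq)
qed

lemma w0_bounds:
  assumes "0 \<le> y" "y \<le> 1/2" shows "0 \<le> w0 y" "w0 y \<le> 2" "\<bar>w0 y\<bar> \<le> 4 * sqrt y"
proof -
  have l1: "\<bar>ln (1 - y)\<bar> \<le> 2 * y" "ln (1 - y) \<le> 0" using abs_ln_one_minus_le assms by auto
  have l2: "\<bar>xlnx y\<bar> \<le> 2 * sqrt y" "\<bar>xlnx y\<bar> \<le> 1/2"
    using abs_xlnx_le_sqrt abs_xlnx_le_half assms by auto
  have "y * \<bar>ln (1 - y)\<bar> \<le> y * (2 * y)" using l1 assms by (intro mult_left_mono) auto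
  moreover have "y * (2 * y) \<le> y" using mult_left_mono[of "2*y" 1 y] assms by simp
  ultimately have l3: "\<bar>y * ln (1 - y)\<bar> \<le> y" using assms by (simp add: abs_mult)
  have ys: "y \<le> sqrt y" using assms by (simp add: real_le_rsqrt power2_eq_square mult_left_le_one_le)
  have l4: "xlnx y \<le> y * ln (1 - y)"
  proof (cases "y = 0")
    case False
    hence "ln y \<le> ln (1 - y)" using assms by (subst ln_le_cancel_iff) auto
    thus ?thesis unfolding xlnx_def using assms by (intro mult_left_mono) auto
  qed (simp add: xlnx_def)
  have e: "2 * w0 y = y * ln (1 - y) - xlnx y - 2 * ln (1 - y)"
    using w0_eq_w0_ext[OF assms] unfolding w0_ext_def by simp
  note l = l1 l2 l3 l4 ys assms
  show lo: "0 \<le> w0 y" using e l by linarith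
  show "w0 y \<le> 2" using e l by linarith
  have "w0 y \<le> 4 * sqrt y" using e l by linarith
  thus "\<bar>w0 y\<bar> \<le> 4 * sqrt y" using lo by simp
qed

lemma abs_w_fun_le: "\<bar>w_fun y\<bar> \<le> 2"
  using w0_bounds[of "\<bar>round_rem y\<bar>"] abs_round_rem_le[of y]
  by (simp add: w_fun_eq_w0_abs_round_rem)

text \<open>\<open>ln_prim\<close> is the primitive of \<open>t \<mapsto> ln (1 - t)\<close> vanishing at \<open>0\<close>; the sum in \<open>\<Phi>\<close> is a
  Riemann sum of it, and since \<open>ln (1 - t)\<close> decreases each term is squeezed between two
  increments of \<open>ln_prim\<close>.\<close>

definition ln_prim :: "real \<Rightarrow> real" where "ln_prim t = - (1 - t) * ln (1 - t) - t"

lemma ln_prim_0 [simp]: "ln_prim 0 = 0"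
  unfolding ln_prim_def by simp

lemma ln_prim_diff_le:
  assumes "0 \<le> a" "a \<le> b" "b \<le> 1" "a < 1" shows "ln_prim b - ln_prim a \<le> (b - a) * ln (1 - a)"
proof -
  define P Q where "P = 1 - a" and "Q = 1 - b"
  have P: "P > 0" and Q: "Q \<ge> 0" using assms unfolding P_def Q_def by auto
  have "Q * ln P - Q * ln Q \<le> P - Q"
  proof (cases "Q = 0")
    case False
    hence Q: "Q > 0" using Q by simp
    have "ln (P / Q) \<le> P / Q - 1" using P Q by (intro ln_le_minus_one) simp
    hence "Q * ln (P / Q) \<le> Q * (P / Q - 1)" using Q by (intro mult_left_mono) auto
    thus ?thesis using P Q by (simp add: ln_div algebra_simps)
  qed (use P in simp)
  moreover have "ln_prim b - ln_prim a = - Q * ln Q + P * ln P - (P - Q)"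
    unfolding ln_prim_def P_def Q_def by (simp add: algebra_simps)
  ultimately show ?thesis unfolding P_def Q_def by (simp add: algebra_simps)
qed

lemma ln_prim_diff_ge:
  assumes "0 \<le> a" "a \<le> b" "b < 1" shows "(b - a) * ln (1 - b) \<le> ln_prim b - ln_prim a"
proof -
  define P Q where "P = 1 - a" and "Q = 1 - b"
  have P: "P > 0" and Q: "Q > 0" using assms unfolding P_def Q_def by auto
  have "ln (Q / P) \<le> Q / P - 1" using P Q by (intro ln_le_minus_one) simp
  hence "P * ln (Q / P) \<le> P * (Q / P - 1)" using P by (intro mult_left_mono) auto
  hence "P * ln Q - P * ln P \<le> Q - P" using P Q by (simp add: ln_div algebra_simps)
  moreover have "ln_prim b - ln_prim a = - Q * ln Q + P * ln P - (P - Q)"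
    unfolding ln_prim_def P_def Q_def by (simp add: algebra_simps)
  ultimately show ?thesis unfolding P_def Q_def by (simp add: algebra_simps)
qed

lemma ln_prim_bounds:
  assumes "0 \<le> t" "t \<le> 1" shows "ln_prim t \<le> 0" "- 1 \<le> ln_prim t" "\<bar>ln_prim t + 1\<bar> \<le> 3 * sqrt (1 - t)"
proof -
  show "ln_prim t \<le> 0" using ln_prim_diff_le[of 0 t] assms by (cases "t = 1") (auto simp: ln_prim_def)
  have l: "ln (1 - t) \<le> 0" using assms by (cases "t = 1") auto
  have e: "ln_prim t + 1 = (1 - t) - xlnx (1 - t)" unfolding ln_prim_def xlnx_def by (simp add: algebra_simps)
  have "0 \<le> (1 - t) * (1 - ln (1 - t))" using assms l by (intro mult_nonneg_nonneg) auto
  thus "- 1 \<le> ln_prim t" using e unfolding xlnx_def by (simp add: algebra_simps)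
  have "\<bar>xlnx (1 - t)\<bar> \<le> 2 * sqrt (1 - t)" using assms by (intro abs_xlnx_le_sqrt) auto
  moreover have "1 - t \<le> sqrt (1 - t)"
    using assms by (simp add: real_le_rsqrt power2_eq_square mult_left_le_one_le)
  ultimately show "\<bar>ln_prim t + 1\<bar> \<le> 3 * sqrt (1 - t)" unfolding e using assms by linarith
qed

lemma abs_ln_prim_le: assumes "0 \<le> t" "t \<le> 1/2" shows "\<bar>ln_prim t\<bar> \<le> 2 * t"
proof -
  have a: "\<bar>ln (1 - t)\<bar> \<le> 2 * t" "ln (1 - t) \<le> 0" using abs_ln_one_minus_le assms by auto
  have "(1 - t) * (- ln (1 - t)) \<le> 1 * (2 * t)" using a assms by (intro mult_mono) auto
  moreover have "0 \<le> (1 - t) * (- ln (1 - t))" using a assms by (intro mult_nonneg_nonneg) auto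
  moreover have "ln_prim t = (1 - t) * (- ln (1 - t)) - t" unfolding ln_prim_def by (simp add: algebra_simps)
  ultimately show ?thesis using assms by linarith
qed

definition ln_sum :: "real \<Rightarrow> real" where
  "ln_sum z = z * (\<Sum>j=1..nat \<lfloor>1 / z\<rfloor> - 1. ln (1 - real j * z))"

lemma floor_recip_facts:
  assumes "0 < z" "z \<le> 1/2"
  shows "nat \<lfloor>1 / z\<rfloor> \<ge> 2" "real (nat \<lfloor>1 / z\<rfloor>) * z \<le> 1" "1 < (real (nat \<lfloor>1 / z\<rfloor>) + 1) * z"
    "real (nat \<lfloor>1 / z\<rfloor>) = of_int \<lfloor>1 / z\<rfloor>"
proof -
  have f: "of_int \<lfloor>1 / z\<rfloor> \<le> 1 / z" "1 / z < of_int \<lfloor>1 / z\<rfloor> + 1" by linarith+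
  have "1 / z \<ge> 2" using assms by (simp add: field_simps)
  hence "\<lfloor>1 / z\<rfloor> \<ge> 2" by linarith
  thus "nat \<lfloor>1 / z\<rfloor> \<ge> 2" and n: "real (nat \<lfloor>1 / z\<rfloor>) = of_int \<lfloor>1 / z\<rfloor>" by linarith+
  have "of_int \<lfloor>1 / z\<rfloor> * z \<le> 1 / z * z" "1 / z * z < (of_int \<lfloor>1 / z\<rfloor> + 1) * z"
    using f assms by (intro mult_right_mono mult_strict_right_mono; simp)+
  thus "real (nat \<lfloor>1 / z\<rfloor>) * z \<le> 1" "1 < (real (nat \<lfloor>1 / z\<rfloor>) + 1) * z"
    unfolding n using assms by simp_all
qed

lemma ln_sum_between_ln_prim:
  assumes "0 < z" "z \<le> 1/2"
  defines "n \<equiv> nat \<lfloor>1 / z\<rfloor>"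
  shows "ln_prim (real n * z) - ln_prim z \<le> ln_sum z" "ln_sum z \<le> ln_prim ((real n - 1) * z)"
proof -
  note n = floor_recip_facts[OF assms(1,2), folded n_def]
  have S: "ln_sum z = (\<Sum>j=1..n - 1. z * ln (1 - real j * z))"
    unfolding ln_sum_def n_def by (simp add: sum_distrib_left)
  have "(\<Sum>j=1..n - 1. ln_prim (real (Suc j) * z) - ln_prim (real j * z)) \<le> ln_sum z"
    unfolding S
  proof (rule sum_mono)
    fix j assume j: "j \<in> {1..n - 1}"
    hence "real (Suc j) * z \<le> real n * z" using assms by (intro mult_right_mono) auto
    hence "ln_prim (real (Suc j) * z) - ln_prim (real j * z) \<le> (real (Suc j) * z - real j * z) * ln (1 - real j * z)"
      using n assms by (intro ln_prim_diff_le) (auto simp: algebra_simps)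
    thus "ln_prim (real (Suc j) * z) - ln_prim (real j * z) \<le> z * ln (1 - real j * z)" by (simp add: algebra_simps)
  qed
  thus "ln_prim (real n * z) - ln_prim z \<le> ln_sum z"
    using sum_Suc_diff[where f = "\<lambda>i. ln_prim (real i * z)" and m = 1 and n = "n - 1"] n(1) by simp
  have "ln_sum z \<le> (\<Sum>j=1..n - 1. ln_prim ((real (Suc j) - 1) * z) - ln_prim ((real j - 1) * z))"
    unfolding S
  proof (rule sum_mono)
    fix j assume j: "j \<in> {1..n - 1}"
    hence "real j * z \<le> (real n - 1) * z" using assms by (intro mult_right_mono) auto
    hence "(real j * z - (real j - 1) * z) * ln (1 - real j * z) \<le> ln_prim (real j * z) - ln_prim ((real j - 1) * z)"
      using n j assms by (intro ln_prim_diff_ge) (auto simp: algebra_simps)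
    thus "z * ln (1 - real j * z) \<le> ln_prim ((real (Suc j) - 1) * z) - ln_prim ((real j - 1) * z)"
      by (simp add: algebra_simps)
  qed
  thus "ln_sum z \<le> ln_prim ((real n - 1) * z)"
    using sum_Suc_diff[where f = "\<lambda>i. ln_prim ((real i - 1) * z)" and m = 1 and n = "n - 1"] n(1) by simp
qed

lemma ln_sum_bounds:
  assumes "0 < z" "z \<le> 1/2"
  shows "- 1 \<le> ln_sum z" "ln_sum z \<le> 0" "\<bar>ln_sum z + 1\<bar> \<le> 5 * sqrt z"
proof -
  define n where "n = nat \<lfloor>1 / z\<rfloor>"
  note n = floor_recip_facts[OF assms, folded n_def]
  note low = ln_sum_between_ln_prim(1)[OF assms, folded n_def]
  note up = ln_sum_between_ln_prim(2)[OF assms, folded n_def]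
  have nz: "0 \<le> 1 - real n * z" "1 - real n * z \<le> z" using n by (auto simp: algebra_simps)
  have n1z: "0 \<le> (real n - 1) * z" "(real n - 1) * z \<le> 1" "1 - (real n - 1) * z \<le> 2 * z"
    using n assms by (auto simp: algebra_simps)
  have g1: "ln_prim ((real n - 1) * z) \<le> 0" "\<bar>ln_prim ((real n - 1) * z) + 1\<bar> \<le> 3 * sqrt (1 - (real n - 1) * z)"
    using ln_prim_bounds n1z by auto
  have g2: "- 1 \<le> ln_prim (real n * z)" "\<bar>ln_prim (real n * z) + 1\<bar> \<le> 3 * sqrt (1 - real n * z)"
    using ln_prim_bounds nz n by auto
  have g3: "ln_prim z \<le> 0" "\<bar>ln_prim z\<bar> \<le> 2 * z" using ln_prim_bounds abs_ln_prim_le assms by auto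
  show "- 1 \<le> ln_sum z" "ln_sum z \<le> 0" using low up g1 g2 g3 by linarith+
  have "sqrt 2 \<le> (5/3::real)" by (rule real_le_lsqrt) (auto simp: power2_eq_square)
  hence "sqrt 2 * sqrt z \<le> 5/3 * sqrt z" using assms by (intro mult_right_mono) auto
  moreover have "sqrt (1 - (real n - 1) * z) \<le> sqrt 2 * sqrt z"
    using n1z by (simp add: real_sqrt_mult[symmetric])
  moreover have "sqrt (1 - real n * z) \<le> sqrt z" using nz by simp
  moreover have "z \<le> sqrt z" using assms by (simp add: real_le_rsqrt power2_eq_square mult_left_le_one_le)
  ultimately show "\<bar>ln_sum z + 1\<bar> \<le> 5 * sqrt z" using low up g1 g2 g3 by (simp add: abs_le_iff)
qed

lemma mult_gaussA: "z > 0 \<Longrightarrow> z * gaussA z = 1 - of_int \<lfloor>1 / z\<rfloor> * z"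
  unfolding gaussA_def by (simp add: algebra_simps)

lemma Phi_eq_xlnx: "Phi z = xlnx z + xlnx (z * gaussA z) + ln_sum z"
  unfolding Phi_def xlnx_def ln_sum_def by simp

lemma Phi_bounds: assumes "0 < z" "z \<le> 1/2" shows "\<bar>Phi z\<bar> \<le> 2" "\<bar>Phi z + 1\<bar> \<le> 9 * sqrt z"
proof -
  define n where "n = nat \<lfloor>1 / z\<rfloor>"
  note n = floor_recip_facts[OF assms, folded n_def]
  have t: "z * gaussA z = 1 - real n * z" using mult_gaussA[of z] assms n by simp
  have t0: "0 \<le> 1 - real n * z" "1 - real n * z \<le> z" using n by (auto simp: algebra_simps)
  have x1: "\<bar>xlnx z\<bar> \<le> 1/2" "\<bar>xlnx z\<bar> \<le> 2 * sqrt z"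
    using abs_xlnx_le_half abs_xlnx_le_sqrt assms by auto
  have x2: "\<bar>xlnx (1 - real n * z)\<bar> \<le> 1/2" "\<bar>xlnx (1 - real n * z)\<bar> \<le> 2 * sqrt (1 - real n * z)"
    using abs_xlnx_le_half abs_xlnx_le_sqrt t0 assms by auto
  have "sqrt (1 - real n * z) \<le> sqrt z" using t0 by simp
  thus "\<bar>Phi z\<bar> \<le> 2" "\<bar>Phi z + 1\<bar> \<le> 9 * sqrt z"
    using x1 x2 ln_sum_bounds[OF assms] unfolding Phi_eq_xlnx t abs_le_iff by linarith+
qed

lemma f_fun_bounds: assumes "0 < z" "z \<le> 1/2" shows "\<bar>f_fun z\<bar> \<le> 5" "\<bar>f_fun z - 1\<bar> \<le> 15 * sqrt z"
proof -
  have w: "\<bar>w_fun z\<bar> \<le> 4 * sqrt z" "\<bar>w_fun z\<bar> \<le> 2"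
    using w0_bounds[of z] w_fun_eq_w0[of z] assms by auto
  have "z * \<bar>w_fun (gaussA z)\<bar> \<le> z * 2" using abs_w_fun_le assms by (intro mult_left_mono) auto
  hence w2: "\<bar>z * w_fun (gaussA z)\<bar> \<le> 2 * z" using assms by (simp add: abs_mult)
  have "z \<le> sqrt z" using assms by (simp add: real_le_rsqrt power2_eq_square mult_left_le_one_le)
  thus "\<bar>f_fun z\<bar> \<le> 5" "\<bar>f_fun z - 1\<bar> \<le> 15 * sqrt z"
    using w w2 Phi_bounds[OF assms] assms unfolding f_fun_def abs_le_iff by linarith+
qed

lemma f_fun_0 [simp]: "f_fun 0 = 0"
  unfolding f_fun_def Phi_def w_fun_def w0_def by simp

lemma f_fun_half [simp]: "f_fun (1/2) = 0"
proof -
  have "gaussA (1/2) = 0" unfolding gaussA_def by simp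
  moreover have "frac (1/2::real) = 1/2" by (simp add: frac_eq)
  ultimately show ?thesis unfolding f_fun_def Phi_def w_fun_def w0_def by simp
qed

lemma abs_f_tilde_le: "\<bar>f_tilde y\<bar> \<le> 5"
proof -
  have "\<bar>f_fun z\<bar> \<le> 5" if "0 \<le> z" "z \<le> 1/2" for z
    using f_fun_bounds(1)[of z] that by (cases "z = 0") auto
  thus ?thesis unfolding f_tilde_def using frac_ge_0[of y] frac_lt_1[of y] by auto
qed

lemma f_tilde_minus: "f_tilde (- y) = - f_tilde y"
proof (cases "y \<in> \<int>")
  case True
  hence "frac y = 0" "frac (- y) = 0" by (simp_all add: frac_eq_0_iff)
  thus ?thesis unfolding f_tilde_def by (simp only:) simp
next
  case False
  hence fn: "frac (- y) = 1 - frac y" and "0 < frac y" by (simp_all add: frac_neg frac_gt_0_iff)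
  consider "frac y < 1/2" | "frac y = 1/2" | "frac y > 1/2" by linarith
  thus ?thesis
  proof cases
    case 2 thus ?thesis unfolding f_tilde_def fn 2 by simp
  qed (use fn frac_lt_1[of y] \<open>0 < frac y\<close> in \<open>auto simp: f_tilde_def\<close>)
qed

lemma f_tilde_eq_f_fun: "0 \<le> y \<Longrightarrow> y < 1/2 \<Longrightarrow> f_tilde y = f_fun y"
  unfolding f_tilde_def by (simp add: frac_eq)

text \<open>On each interval \<open>1/(n+1) < z \<le> 1/n\<close> the function \<open>\<Phi>\<close> coincides with \<open>Phi_n n\<close>,
  which is continuous; at \<open>z = 1/n\<close> the pieces for \<open>n - 1\<close> and \<open>n\<close> agree.\<close>

definition Phi_n :: "nat \<Rightarrow> real \<Rightarrow> real" where
  "Phi_n n z = xlnx z + xlnx (1 - real n * z) + z * (\<Sum>j=1..n - 1. ln (1 - real j * z))"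

lemma Phi_eq_Phi_n:
  assumes "1 \<le> n" "1 / (real n + 1) < z" "z \<le> 1 / real n" shows "Phi z = Phi_n n z"
proof -
  have z: "0 < z" using assms(2) by (smt (verit) divide_pos_pos of_nat_0_le_iff)
  have "\<lfloor>1 / z\<rfloor> = int n" using assms z by (intro floor_unique) (simp_all add: field_simps)
  thus ?thesis using mult_gaussA[OF z] unfolding Phi_eq_xlnx Phi_n_def ln_sum_def by simp
qed

lemma isCont_Phi_n:
  assumes "real n * z \<le> 1" "0 < z" shows "isCont (Phi_n n) z"
proof -
  have "1 - real j * z \<noteq> 0" if "j \<in> {1..n - 1}" for j
  proof -
    have "real j * z < real n * z" using that assms(2) by (intro mult_strict_right_mono) auto
    thus ?thesis using assms(1) by simp
  qed
  thus ?thesis unfolding Phi_n_def by (intro continuous_intros) auto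
qed

lemma Phi_n_Suc_eq:
  assumes "real (Suc (Suc k)) * z = 1" shows "Phi_n (Suc k) z = Phi_n (Suc (Suc k)) z"
proof -
  have a: "1 - real (Suc k) * z = z" using assms by (simp add: algebra_simps)
  have b: "1 - real (Suc (Suc k)) * z = 0" using assms by simp
  have "(\<Sum>j=1..Suc (Suc k) - 1. ln (1 - real j * z)) = (\<Sum>j=1..Suc k - 1. ln (1 - real j * z)) + ln z"
    using a by (simp add: sum.cl_ivl_Suc)
  thus ?thesis unfolding Phi_n_def a b xlnx_def by (simp add: algebra_simps)
qed

lemma tendsto_Phi_within:
  assumes "\<forall>\<^sub>F y in at z within S. y \<in> {1 / (real n + 1)<..1 / real n}" "1 \<le> n"
    and "isCont (Phi_n n) z" "Phi_n n z = Phi z"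
  shows "(Phi \<longlongrightarrow> Phi z) (at z within S)"
proof -
  have "\<forall>\<^sub>F y in at z within S. Phi y = Phi_n n y"
    using assms(1) by (rule eventually_mono) (use assms(2) Phi_eq_Phi_n in auto)
  from tendsto_cong[OF this] show ?thesis using tendsto_mono[OF at_le assms(3)[unfolded isCont_def]] assms(4)
    by simp
qed

lemma floor_recip_interval:
  assumes "0 < z" "z < 1"
  defines "n \<equiv> nat \<lfloor>1/z\<rfloor>"
  shows "n \<ge> 1" "1 / (real n + 1) < z" "z \<le> 1 / real n"
proof -
  have "1 \<le> \<lfloor>1/z\<rfloor>" using assms(1,2) by (simp add: le_floor_iff)
  hence n_eq: "real n = of_int \<lfloor>1/z\<rfloor>" and "n \<ge> 1" unfolding n_def by linarith+
  moreover have "1 / (real n + 1) < 1 / (1 / z)" using assms(1,2) n_eq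
    by (intro divide_strict_left_mono) (linarith, auto)
  moreover have "1 / (1 / z) \<le> 1 / real n" using assms(1,2) n_eq \<open>n \<ge> 1\<close>
    by (intro divide_left_mono) (linarith, auto)
  ultimately show "n \<ge> 1" "1 / (real n + 1) < z" "z \<le> 1 / real n" by simp_all
qed

lemma isCont_Phi: assumes "0 < z" "z < 1" shows "isCont Phi z"
proof -
  define n where "n = nat \<lfloor>1/z\<rfloor>"
  note n = floor_recip_interval[OF assms, folded n_def]
  have Phi_z: "Phi_n n z = Phi z" using Phi_eq_Phi_n n by simp
  have "(Phi \<longlongrightarrow> Phi z) (at_left z)"
  proof (rule tendsto_Phi_within[OF _ _ _ Phi_z])
    show "\<forall>\<^sub>F y in at_left z. y \<in> {1 / (real n + 1)<..1 / real n}"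
      using eventually_at_left_real[OF n(2)] by (rule eventually_mono) (use n in auto)
  qed (use n assms isCont_Phi_n in \<open>auto simp: field_simps\<close>)
  moreover have "(Phi \<longlongrightarrow> Phi z) (at_right z)"
  proof (cases "z = 1 / real n")
    case False
    hence "z < 1 / real n" using n by simp
    from eventually_at_right_real[OF this]
    have "\<forall>\<^sub>F y in at_right z. y \<in> {1 / (real n + 1)<..1 / real n}"
      by (rule eventually_mono) (use n in auto)
    thus ?thesis by (intro tendsto_Phi_within[OF _ _ _ Phi_z])
      (use n assms isCont_Phi_n in \<open>auto simp: field_simps\<close>)
  next
    case True
    hence "n \<ge> 2" using n assms by (cases "n = 1") auto
    then obtain k where k: "n = Suc (Suc k)" by (metis add_2_eq_Suc le_Suc_ex)
    have "z < 1 / real (Suc k)" using True k assms by (simp add: field_simps)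
    from eventually_at_right_real[OF this]
    have "\<forall>\<^sub>F y in at_right z. y \<in> {1 / (real (Suc k) + 1)<..1 / real (Suc k)}"
      by (rule eventually_mono) (use True k in auto)
    moreover have "Phi_n (Suc k) z = Phi z" using Phi_n_Suc_eq[of k z] True k Phi_z by simp
    moreover have "isCont (Phi_n (Suc k)) z"
      using True k assms by (intro isCont_Phi_n) (simp_all add: field_simps)
    ultimately show ?thesis by (intro tendsto_Phi_within) auto
  qed
  ultimately show ?thesis using continuous_at_split unfolding continuous_within by blast
qed

lemma isCont_f_fun: assumes "0 < z" "z < 1" shows "isCont f_fun z"
proof -
  have "w_fun (gaussA y) = w_fun (1 / y)" for y
    using w_fun_add_of_int[of "1/y" "- \<lfloor>1/y\<rfloor>"] unfolding gaussA_def by simp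
  hence "f_fun = (\<lambda>y. - w_fun y - y * w_fun (1 / y) - Phi y)" unfolding f_fun_def by auto
  moreover have "isCont (\<lambda>y. - w_fun y - y * w_fun (1 / y) - Phi y) z"
    using assms by (intro continuous_intros isCont_Phi) auto
  ultimately show ?thesis by simp
qed

lemma isCont_f_tilde: assumes "0 < r" "r \<le> 1/2" shows "isCont f_tilde r"
proof (cases "r < 1/2")
  case True
  have "\<forall>\<^sub>F y in nhds r. y \<in> {0<..<1/2}" using assms True by (intro eventually_nhds_in_open) auto
  hence "\<forall>\<^sub>F y in nhds r. f_tilde y = f_fun y" by (rule eventually_mono) (simp add: f_tilde_eq_f_fun)
  hence "isCont f_tilde r \<longleftrightarrow> isCont f_fun r" by (rule isCont_cong)
  thus ?thesis using isCont_f_fun assms True by simp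
next
  case False
  hence r: "r = 1/2" using assms by simp
  have f_tilde_r: "f_tilde (1/2) = 0" unfolding f_tilde_def by (simp add: frac_eq)
  have "(f_tilde \<longlongrightarrow> 0) (at_left (1/2))"
  proof -
    have "\<forall>\<^sub>F y in at_left (1/2::real). f_fun y = f_tilde y"
      using eventually_at_left_real[of 0 "1/2::real"]
      by (rule eventually_mono) (auto simp: f_tilde_eq_f_fun)
    moreover have "(f_fun \<longlongrightarrow> f_fun (1/2)) (at_left (1/2))"
      using isCont_f_fun[of "1/2"] unfolding isCont_def by (rule tendsto_within_subset) auto
    ultimately show ?thesis by (auto dest: tendsto_cong[THEN iffD1])
  qed
  moreover have "(f_tilde \<longlongrightarrow> 0) (at_right (1/2))"
  proof -
    have "\<forall>\<^sub>F y in at_right (1/2::real). - f_fun (1 - y) = f_tilde y"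
      using eventually_at_right_real[of "1/2::real" 1]
      by (rule eventually_mono) (auto simp: f_tilde_def frac_eq)
    moreover have "isCont (\<lambda>y. f_fun (1 - y)) (1/2)"
      using continuous_at_compose[of "1/2" "\<lambda>y. 1 - y" f_fun] isCont_f_fun[of "1 - 1/2"] by (simp add: o_def)
    hence "isCont (\<lambda>y. - f_fun (1 - y)) (1/2)" by (rule isCont_minus)
    hence "((\<lambda>y. - f_fun (1 - y)) \<longlongrightarrow> - f_fun (1 - 1/2)) (at_right (1/2))"
      unfolding isCont_def by (rule tendsto_within_subset) auto
    ultimately show ?thesis by (auto dest: tendsto_cong[THEN iffD1])
  qed
  ultimately show ?thesis unfolding r isCont_def f_tilde_r by (rule filterlim_split_at)
qed

lemma f_tilde_tendsto_at_right_0: "(f_tilde \<longlongrightarrow> 1) (at_right 0)"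
proof -
  have "\<forall>\<^sub>F y in at_right (0::real). norm (f_tilde y - 1) \<le> 15 * sqrt y"
    using eventually_at_right_real[of 0 "1/2::real"]
  proof (rule eventually_mono)
    fix y :: real assume "y \<in> {0<..<1/2}"
    thus "norm (f_tilde y - 1) \<le> 15 * sqrt y" using f_tilde_eq_f_fun[of y] f_fun_bounds(2)[of y] by simp
  qed simp
  moreover have "((\<lambda>y. 15 * sqrt y) \<longlongrightarrow> 15 * sqrt 0) (at_right (0::real))"
    by (intro tendsto_intros)
  hence "((\<lambda>y. 15 * sqrt y) \<longlongrightarrow> 0) (at_right (0::real))" by simp
  ultimately have "((\<lambda>y. f_tilde y - 1) \<longlongrightarrow> 0) (at_right 0)"
    by (rule Lim_null_comparison)
  thus ?thesis by (simp add: LIM_zero_iff)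
qed

section \<open>The series through the signed orbit\<close>

text \<open>On signed numbers the map \<open>y \<mapsto> round_rem (1 / \<bar>y\<bar>)\<close> encodes both \<open>A_half\<close> and the signs:
  its orbit from \<open>x \<ge> 0\<close> is \<open>k \<mapsto> \<epsilon>\<^sub>k x\<^sub>k\<close>.\<close>

definition nicf_step :: "real \<Rightarrow> real" where "nicf_step y = round_rem (1 / \<bar>y\<bar>)"

definition nicf_orbit :: "real \<Rightarrow> nat \<Rightarrow> real" where "nicf_orbit x k = (nicf_step ^^ k) x"

lemma nicf_step_minus [simp]: "nicf_step (- y) = nicf_step y"
  unfolding nicf_step_def by simp

lemma abs_nicf_step_le: "\<bar>nicf_step y\<bar> \<le> 1/2"
  unfolding nicf_step_def by (rule abs_round_rem_le)

lemma nicf_step_pos: "y > 0 \<Longrightarrow> nicf_step y = 1 / y - of_int (round (1 / y))"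
  unfolding nicf_step_def round_rem_def by simp

lemma nicf_orbit_0 [simp]: "nicf_orbit x 0 = x"
  unfolding nicf_orbit_def by simp

lemma nicf_orbit_Suc: "nicf_orbit x (Suc k) = nicf_orbit (nicf_step x) k"
  unfolding nicf_orbit_def by (simp only: funpow_Suc_right comp_def)

lemma nicf_orbit_Suc': "nicf_orbit x (Suc k) = nicf_step (nicf_orbit x k)"
  unfolding nicf_orbit_def by simp

lemma nicf_x_eps_eq_nicf_orbit:
  assumes "0 \<le> x" shows "nicf_x x k = \<bar>nicf_orbit x k\<bar> \<and> nicf_eps x k * nicf_x x k = nicf_orbit x k"
proof (induction k)
  case 0 thus ?case using assms unfolding nicf_x_def nicf_eps_def by simp
next
  case (Suc k)
  have x_Suc: "nicf_x x (Suc k) = \<bar>nicf_orbit x (Suc k)\<bar>"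
    using Suc unfolding nicf_x_def nicf_orbit_Suc' nicf_step_def by (simp add: A_half_eq_abs_round_rem)
  have "nicf_eps x (Suc k) = sgn (round_rem (1 / nicf_x x k))"
    unfolding nicf_eps_def nicf_a_def round_rem_def round_def by simp
  hence "nicf_eps x (Suc k) = sgn (nicf_orbit x (Suc k))"
    using Suc unfolding nicf_orbit_Suc' nicf_step_def by simp
  thus ?case using x_Suc by (simp add: sgn_mult_abs)
qed

lemma dterm_eq_nicf_orbit:
  assumes "0 \<le> x" shows "dterm x i = (-1) ^ i * (\<Prod>k<i. nicf_orbit x k) * f_tilde (nicf_orbit x i)"
proof -
  have "nicf_eps x k * nicf_x x k = nicf_orbit x k" for k using nicf_x_eps_eq_nicf_orbit[OF assms] by blast
  thus ?thesis unfolding dterm_def beta_shift_def by simp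
qed

text \<open>Horner form of \<open>DeltaM\<close> along the signed orbit, meaningful for arguments of either sign.\<close>

fun DeltaM_odd :: "nat \<Rightarrow> real \<Rightarrow> real" where
  "DeltaM_odd 0 y = f_tilde y"
| "DeltaM_odd (Suc m) y = f_tilde y - y * DeltaM_odd m (nicf_step y)"

lemma DeltaM_odd_0: "DeltaM_odd 0 = f_tilde"
  by (rule ext) simp

lemma DeltaM_odd_minus: "DeltaM_odd m (- y) = - DeltaM_odd m y"
  by (induction m) (simp_all add: f_tilde_minus)

lemma abs_DeltaM_odd_le: "\<bar>y\<bar> \<le> 1/2 \<Longrightarrow> \<bar>DeltaM_odd m y\<bar> \<le> 10"
proof (induction m arbitrary: y)
  case 0 thus ?case using abs_f_tilde_le[of y] by simp
next
  case (Suc m)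
  have "\<bar>y * DeltaM_odd m (nicf_step y)\<bar> \<le> 1/2 * 10" unfolding abs_mult
    using Suc abs_nicf_step_le by (intro mult_mono) auto
  thus ?case using abs_f_tilde_le[of y] by simp
qed

lemma DeltaM_eq_DeltaM_odd: assumes "0 \<le> x" shows "DeltaM M x = DeltaM_odd M x"
proof -
  define t where "t y i = (-1) ^ i * (\<Prod>k<i. nicf_orbit y k) * f_tilde (nicf_orbit y i)" for y i
  have t_Suc: "t y (Suc i) = - y * t (nicf_step y) i" for y i
    unfolding t_def by (simp del: prod.lessThan_Suc add: prod.lessThan_Suc_shift nicf_orbit_Suc)
  have "(\<Sum>i\<le>M. t y i) = DeltaM_odd M y" for y
  proof (induction M arbitrary: y)
    case (Suc M)
    have "(\<Sum>i\<le>Suc M. t y i) = t y 0 + (\<Sum>i\<le>M. t y (Suc i))" by (rule sum.atMost_Suc_shift)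
    also have "\<dots> = f_tilde y - y * (\<Sum>i\<le>M. t (nicf_step y) i)"
      unfolding t_Suc by (simp add: t_def sum_distrib_left sum_negf)
    finally show ?case by (simp add: Suc.IH)
  qed (simp add: t_def)
  thus ?thesis unfolding DeltaM_def t_def dterm_eq_nicf_orbit[OF assms] .
qed

lemma abs_prod_nicf_orbit_le: "\<bar>x\<bar> \<le> 1/2 \<Longrightarrow> \<bar>\<Prod>k<i. nicf_orbit x k\<bar> \<le> (1/2) ^ i"
proof -
  assume x: "\<bar>x\<bar> \<le> 1/2"
  have "\<bar>nicf_orbit x k\<bar> \<le> 1/2" for k
    using x abs_nicf_step_le by (cases k) (simp_all add: nicf_orbit_Suc')
  hence "(\<Prod>k<i. \<bar>nicf_orbit x k\<bar>) \<le> (\<Prod>k<i. 1/2)" by (intro prod_mono) auto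
  thus ?thesis by (simp add: abs_prod)
qed

lemma abs_dterm_le: assumes "0 \<le> x" "x \<le> 1/2" shows "\<bar>dterm x i\<bar> \<le> 5 * (1/2) ^ i"
proof -
  have "\<bar>\<Prod>k<i. nicf_orbit x k\<bar> * \<bar>f_tilde (nicf_orbit x i)\<bar> \<le> (1/2) ^ i * 5"
    using abs_prod_nicf_orbit_le[of x i] abs_f_tilde_le assms by (intro mult_mono) auto
  thus ?thesis unfolding dterm_eq_nicf_orbit[OF assms(1)] by (simp add: abs_mult)
qed

lemma uniformly_convergent_dterm:
  "uniformly_convergent_on ({0<..<1/2} - \<rat>) (\<lambda>n x. \<Sum>i<n. dterm x i)"
proof (rule Weierstrass_m_test')
  show "norm (dterm x n) \<le> 5 * (1/2) ^ n" if "x \<in> {0<..<1/2::real} - \<rat>" for n x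
    using abs_dterm_le[of x n] that by simp
  show "summable (\<lambda>n. 5 * (1/2::real) ^ n)" by (intro summable_mult summable_geometric) simp
qed

section \<open>One-sided limits through irrationals\<close>

abbreviation at_right_irr :: "real \<Rightarrow> real filter" where
  "at_right_irr r \<equiv> at r within (- \<rat> \<inter> {r<..})"

abbreviation at_left_irr :: "real \<Rightarrow> real filter" where
  "at_left_irr r \<equiv> at r within (- \<rat> \<inter> {..<r})"

lemma eventually_at_right_irr: "(\<And>y. y \<notin> \<rat> \<Longrightarrow> y > r \<Longrightarrow> P y) \<Longrightarrow> eventually P (at_right_irr r)"
  unfolding eventually_at_filter by (rule always_eventually) auto

lemma eventually_at_left_irr: "(\<And>y. y \<notin> \<rat> \<Longrightarrow> y < r \<Longrightarrow> P y) \<Longrightarrow> eventually P (at_left_irr r)"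
  unfolding eventually_at_filter by (rule always_eventually) auto

lemma eventually_at_right_irr_between:
  assumes "r < b" shows "\<forall>\<^sub>F y in at_right_irr r. y \<in> {r<..<b} \<and> y \<notin> \<rat>"
proof -
  have "\<forall>\<^sub>F y in at_right_irr r. y < b" using order_tendstoD(2)[OF tendsto_ident_at assms] .
  moreover have "\<forall>\<^sub>F y in at_right_irr r. r < y \<and> y \<notin> \<rat>" by (rule eventually_at_right_irr) simp
  ultimately show ?thesis by (rule eventually_elim2) auto
qed

lemma eventually_at_left_irr_between:
  assumes "b < r" shows "\<forall>\<^sub>F y in at_left_irr r. y \<in> {b<..<r} \<and> y \<notin> \<rat>"
proof -
  have "\<forall>\<^sub>F y in at_left_irr r. b < y" using order_tendstoD(1)[OF tendsto_ident_at assms] .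
  moreover have "\<forall>\<^sub>F y in at_left_irr r. y < r \<and> y \<notin> \<rat>" by (rule eventually_at_left_irr) simp
  ultimately show ?thesis by (rule eventually_elim2) auto
qed

lemma odd_tendsto_at_left_irr:
  fixes f :: "real \<Rightarrow> real"
  assumes odd: "\<And>y. f (- y) = - f y" and lim: "(f \<longlongrightarrow> L) (at_right_irr a)"
  shows "(f \<longlongrightarrow> - L) (at_left_irr (- a))"
proof -
  have "filterlim uminus (at_right_irr a) (at_left_irr (- a))"
  proof (rule filterlim_at_withinI)
    show "(uminus \<longlongrightarrow> a) (at_left_irr (- a))"
      using tendsto_minus[OF tendsto_ident_at[of "- a" "- \<rat> \<inter> {..< - a}"]] by simp
    show "\<forall>\<^sub>F x in at_left_irr (- a). - x \<in> - \<rat> \<inter> {a<..} - {a}"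
      by (rule eventually_at_left_irr) auto
  qed
  from filterlim_compose[OF lim this] have "((\<lambda>y. f (- y)) \<longlongrightarrow> L) (at_left_irr (- a))" .
  from tendsto_minus[OF this] show ?thesis by (simp add: odd)
qed

lemma odd_tendsto_at_right_irr:
  fixes f :: "real \<Rightarrow> real"
  assumes odd: "\<And>y. f (- y) = - f y" and lim: "(f \<longlongrightarrow> L) (at_left_irr a)"
  shows "(f \<longlongrightarrow> - L) (at_right_irr (- a))"
proof -
  have "filterlim uminus (at_left_irr a) (at_right_irr (- a))"
  proof (rule filterlim_at_withinI)
    show "(uminus \<longlongrightarrow> a) (at_right_irr (- a))"
      using tendsto_minus[OF tendsto_ident_at[of "- a" "- \<rat> \<inter> {- a<..}"]] by simp
    show "\<forall>\<^sub>F x in at_right_irr (- a). - x \<in> - \<rat> \<inter> {..<a} - {a}"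
      by (rule eventually_at_right_irr) auto
  qed
  from filterlim_compose[OF lim this] have "((\<lambda>y. f (- y)) \<longlongrightarrow> L) (at_right_irr (- a))" .
  from tendsto_minus[OF this] show ?thesis by (simp add: odd)
qed

lemma irrational_recip_diff: fixes y :: real assumes "y \<notin> \<rat>" shows "1 / y - of_int k \<notin> \<rat>"
proof
  assume "1 / y - of_int k \<in> \<rat>"
  hence "1 / (1 / y - of_int k + of_int k) \<in> \<rat>" by (intro Rats_divide Rats_add) auto
  thus False using assms by simp
qed

lemma round_recip_eq:
  assumes "0 < y" "of_int K - 1/2 \<le> 1 / y" "1 / y < of_int K + 1/2" shows "nicf_step y = 1 / y - of_int K"
  using assms by (simp add: nicf_step_pos round_unique)

text \<open>Just right of \<open>r\<close> the value \<open>1/y\<close> lies just left of \<open>1/r\<close>; when \<open>1/r\<close> is a half-integer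
  this picks the lower of the two nearest integers, hence \<open>K\<close> is defined by a ceiling.\<close>

lemma nicf_step_filterlim_at_right:
  assumes r: "0 < r" "r \<le> 1/2"
  defines "K \<equiv> \<lceil>1 / r + 1/2\<rceil> - 1"
  shows "filterlim nicf_step (at_left_irr (1 / r - of_int K)) (at_right_irr r)"
proof -
  have "1 / r \<ge> 2" using r by (simp add: field_simps)
  hence K: "of_int K - 1/2 < 1 / r" "1 / r \<le> of_int K + 1/2" "0 < of_int K - (1/2::real)"
    unfolding K_def by linarith+
  define b :: real where "b = 1 / (of_int K - 1/2)"
  have "r < b" unfolding b_def using K r by (simp add: field_simps)
  have step: "nicf_step y = 1 / y - of_int K" and recip_lt: "1 / y < 1 / r" if "y \<in> {r<..<b}" for y
  proof -
    have "1 / y < 1 / r" "1 / b < 1 / y" using that r by (simp_all add: field_simps)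
    moreover have "1 / b = of_int K - 1/2" unfolding b_def by simp
    ultimately show "nicf_step y = 1 / y - of_int K" "1 / y < 1 / r"
      using K that r by (simp_all add: round_recip_eq)
  qed
  have ev: "\<forall>\<^sub>F y in at_right_irr r. y \<in> {r<..<b} \<and> y \<notin> \<rat>"
    using \<open>r < b\<close> by (rule eventually_at_right_irr_between)
  have "((\<lambda>y. 1 / y - of_int K) \<longlongrightarrow> 1 / r - of_int K) (at_right_irr r)"
    using r by (intro tendsto_intros) auto
  moreover have "\<forall>\<^sub>F y in at_right_irr r. 1 / y - of_int K = nicf_step y"
    using ev by (rule eventually_mono) (simp add: step)
  ultimately have "(nicf_step \<longlongrightarrow> 1 / r - of_int K) (at_right_irr r)" by (simp add: tendsto_cong)
  moreover have "\<forall>\<^sub>F y in at_right_irr r. nicf_step y \<in> - \<rat> \<inter> {..<1 / r - of_int K} - {1 / r - of_int K}"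
    using ev by (rule eventually_mono) (use step recip_lt irrational_recip_diff in force)
  ultimately show ?thesis by (rule filterlim_at_withinI)
qed

lemma nicf_step_filterlim_at_left:
  assumes r: "0 < r" "r \<le> 1/2"
  shows "filterlim nicf_step (at_right_irr (round_rem (1 / r))) (at_left_irr r)"
proof -
  define K where "K = round (1 / r)"
  have K: "of_int K - 1/2 \<le> 1 / r" "1 / r < of_int K + 1/2"
    using of_int_round_le[of "1/r"] of_int_round_gt[of "1/r"] unfolding K_def by linarith+
  have "1 / r \<ge> 2" using r by (simp add: field_simps)
  hence "0 < of_int K + (1/2::real)" using K by linarith
  have rr: "round_rem (1 / r) = 1 / r - of_int K" unfolding round_rem_def K_def ..
  define b :: real where "b = 1 / (of_int K + 1/2)"
  have "b < r" "0 < b" unfolding b_def using K \<open>0 < of_int K + 1/2\<close> r by (simp_all add: field_simps)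
  have step: "nicf_step y = 1 / y - of_int K" and recip_gt: "1 / r < 1 / y" if "y \<in> {b<..<r}" for y
  proof -
    have "1 / r < 1 / y" "1 / y < 1 / b" using that \<open>0 < b\<close> by (simp_all add: field_simps)
    moreover have "1 / b = of_int K + 1/2" unfolding b_def by simp
    ultimately show "nicf_step y = 1 / y - of_int K" "1 / r < 1 / y"
      using K that \<open>0 < b\<close> by (simp_all add: round_recip_eq)
  qed
  have ev: "\<forall>\<^sub>F y in at_left_irr r. y \<in> {b<..<r} \<and> y \<notin> \<rat>"
    using \<open>b < r\<close> by (rule eventually_at_left_irr_between)
  have "((\<lambda>y. 1 / y - of_int K) \<longlongrightarrow> 1 / r - of_int K) (at_left_irr r)"
    using r by (intro tendsto_intros) auto
  moreover have "\<forall>\<^sub>F y in at_left_irr r. 1 / y - of_int K = nicf_step y"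
    using ev by (rule eventually_mono) (simp add: step)
  ultimately have "(nicf_step \<longlongrightarrow> round_rem (1 / r)) (at_left_irr r)" unfolding rr by (simp add: tendsto_cong)
  moreover have "\<forall>\<^sub>F y in at_left_irr r. nicf_step y \<in> - \<rat> \<inter> {round_rem (1 / r)<..} - {round_rem (1 / r)}"
    using ev by (rule eventually_mono) (use step recip_gt irrational_recip_diff in \<open>force simp: rr\<close>)
  ultimately show ?thesis by (rule filterlim_at_withinI)
qed

lemma f_tilde_tendsto: "0 < r \<Longrightarrow> r \<le> 1/2 \<Longrightarrow> (f_tilde \<longlongrightarrow> f_tilde r) (at r within S)"
  using isCont_f_tilde[of r] unfolding isCont_def by (rule tendsto_within_subset) auto

lemma DeltaM_odd_Suc_tendsto_at_right_irr:
  assumes "0 < r" "r \<le> 1/2" "(DeltaM_odd m \<longlongrightarrow> L) (at_left_irr (1 / r - of_int (\<lceil>1 / r + 1/2\<rceil> - 1)))"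
  shows "(DeltaM_odd (Suc m) \<longlongrightarrow> f_tilde r - r * L) (at_right_irr r)"
  using assms unfolding DeltaM_odd.simps[abs_def]
  by (intro tendsto_intros f_tilde_tendsto filterlim_compose[OF assms(3) nicf_step_filterlim_at_right])

lemma DeltaM_odd_Suc_tendsto_at_left_irr:
  assumes "0 < r" "r \<le> 1/2" "(DeltaM_odd m \<longlongrightarrow> L) (at_right_irr (round_rem (1 / r)))"
  shows "(DeltaM_odd (Suc m) \<longlongrightarrow> f_tilde r - r * L) (at_left_irr r)"
  using assms unfolding DeltaM_odd.simps[abs_def]
  by (intro tendsto_intros f_tilde_tendsto filterlim_compose[OF assms(3) nicf_step_filterlim_at_left])

lemma DeltaM_odd_tendsto_at_right_irr_0: "(DeltaM_odd m \<longlongrightarrow> 1) (at_right_irr 0)"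
proof -
  have f: "(f_tilde \<longlongrightarrow> 1) (at_right_irr 0)"
    using f_tilde_tendsto_at_right_0 by (rule tendsto_mono[OF at_le, rotated]) auto
  have "((\<lambda>y. y * DeltaM_odd k (nicf_step y)) \<longlongrightarrow> 0) (at_right_irr 0)" for k
  proof (rule Lim_null_comparison)
    show "\<forall>\<^sub>F y in at_right_irr 0. norm (y * DeltaM_odd k (nicf_step y)) \<le> 10 * \<bar>y\<bar>"
      using abs_DeltaM_odd_le[OF abs_nicf_step_le]
      by (intro always_eventually allI) (simp add: abs_mult mult.commute mult_left_mono)
    have "((\<lambda>y::real. 10 * \<bar>y\<bar>) \<longlongrightarrow> 10 * \<bar>0\<bar>) (at_right_irr 0)" by (intro tendsto_intros)
    thus "((\<lambda>y::real. 10 * \<bar>y\<bar>) \<longlongrightarrow> 0) (at_right_irr 0)" by simp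
  qed
  from tendsto_diff[OF f this] show ?thesis
    using f by (cases m) (simp_all add: DeltaM_odd.simps[abs_def])
qed

lemma DeltaM_odd_tendsto_at_left_irr_half: "(DeltaM_odd m \<longlongrightarrow> (if m = 0 then 0 else - 1/2)) (at_left_irr (1/2))"
proof (cases m)
  case 0
  have "f_tilde (1/2) = 0" by (simp add: f_tilde_def frac_eq)
  thus ?thesis using 0 f_tilde_tendsto[of "1/2"] by (simp add: DeltaM_odd_0)
next
  case (Suc k)
  have "round_rem (1 / (1/2)) = 0" unfolding round_rem_def by simp
  hence "(DeltaM_odd k \<longlongrightarrow> 1) (at_right_irr (round_rem (1 / (1/2))))" using DeltaM_odd_tendsto_at_right_irr_0 by simp
  from DeltaM_odd_Suc_tendsto_at_left_irr[OF _ _ this] show ?thesis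
    using Suc by (simp add: f_tilde_def frac_eq)
qed

section \<open>Depth of rationals\<close>

lemma A_half_0 [simp]: "A_half 0 = 0"
  unfolding A_half_def by simp

lemma A_half_le: "A_half z \<le> 1/2"
  unfolding A_half_eq_abs_round_rem by (rule abs_round_rem_le)

lemma A_half_Rats: "z \<in> \<rat> \<Longrightarrow> A_half z \<in> \<rat>"
  unfolding A_half_def by (intro Rats_abs_iff[THEN iffD2] Rats_diff Rats_divide Rats_of_int) auto

lemma A_half_of_int_div:
  fixes p q :: int assumes "0 < p"
  shows "A_half (of_int p / of_int q) = \<bar>of_int (q - round (of_int q / of_int p :: real) * p) / of_int p\<bar>"
  using assms unfolding A_half_eq_abs_round_rem round_rem_def by (simp add: field_simps)

lemma nicf_terminates_of_int_div:
  fixes p q :: int assumes "0 \<le> p" "2 * p \<le> q"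
  shows "\<exists>i\<ge>1. (A_half ^^ i) (of_int p / of_int q) = 0"
  using assms
proof (induction "nat p" arbitrary: p q rule: less_induct)
  case less
  show ?case
  proof (cases "p = 0")
    case True thus ?thesis by (intro exI[of _ 1]) simp
  next
    case False
    hence p: "0 < p" using less.prems by simp
    define p' where "p' = \<bar>q - round (of_int q / of_int p :: real) * p\<bar>"
    have A: "A_half (of_int p / of_int q) = of_int p' / of_int p"
      using A_half_of_int_div[OF p, of q] p unfolding p'_def by simp
    hence "of_int p' / of_int p \<le> (1/2::real)" using A_half_le by metis
    hence "2 * p' \<le> p" using p by (simp add: field_simps)
    then obtain i where "i \<ge> 1" "(A_half ^^ i) (of_int p' / of_int p) = 0"
      using less.hyps[of p' p] p unfolding p'_def by auto
    hence "(A_half ^^ Suc i) (of_int p / of_int q) = 0" by (simp only: funpow_Suc_right comp_def A)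
    thus ?thesis by (intro exI[of _ "Suc i"]) simp
  qed
qed

lemma nicf_terminates: assumes "z \<in> \<rat>" "0 \<le> z" "z \<le> 1/2" shows "\<exists>i\<ge>1. (A_half ^^ i) z = 0"
proof -
  obtain p q where pq: "0 < q" "z = of_int p / of_int q" using assms(1) by (rule Rats_cases') auto
  have "0 \<le> p" using pq assms by (simp add: zero_le_divide_iff)
  moreover have "2 * z * of_int q \<le> 1 * of_int q" using assms(3) pq(1) by (intro mult_right_mono) auto
  hence "real_of_int (2 * p) \<le> real_of_int q" using pq by simp
  ultimately show ?thesis using nicf_terminates_of_int_div pq by auto
qed

lemma nicf_depth_le_iff:
  assumes "\<exists>i\<ge>1. (A_half ^^ i) z = 0"
  shows "nicf_depth z \<le> k \<longleftrightarrow> (\<exists>i. 1 \<le> i \<and> i \<le> k \<and> (A_half ^^ i) z = 0)"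
proof
  have "1 \<le> nicf_depth z \<and> (A_half ^^ nicf_depth z) z = 0"
    unfolding nicf_depth_def by (rule LeastI_ex) (use assms in auto)
  thus "nicf_depth z \<le> k \<Longrightarrow> \<exists>i. 1 \<le> i \<and> i \<le> k \<and> (A_half ^^ i) z = 0" by auto
next
  assume "\<exists>i. 1 \<le> i \<and> i \<le> k \<and> (A_half ^^ i) z = 0"
  then obtain i where "1 \<le> i" "i \<le> k" "(A_half ^^ i) z = 0" by auto
  hence "nicf_depth z \<le> i" unfolding nicf_depth_def by (intro Least_le) auto
  thus "nicf_depth z \<le> k" using \<open>i \<le> k\<close> by simp
qed

lemma nicf_depth_pos: "z \<in> \<rat> \<Longrightarrow> 0 \<le> z \<Longrightarrow> z \<le> 1/2 \<Longrightarrow> \<not> nicf_depth z \<le> 0"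
  using nicf_depth_le_iff[OF nicf_terminates, of z 0] by auto

lemma nicf_depth_le_Suc_iff:
  assumes "z \<in> \<rat>" "0 \<le> z" "z \<le> 1/2"
  shows "nicf_depth z \<le> Suc m \<longleftrightarrow> A_half z = 0 \<or> nicf_depth (A_half z) \<le> m"
proof -
  have "(A_half ^^ Suc j) z = (A_half ^^ j) (A_half z)" for j by (simp only: funpow_Suc_right comp_def)
  moreover have "0 \<le> A_half z" unfolding A_half_def by simp
  ultimately have
    "(\<exists>i. 1 \<le> i \<and> i \<le> Suc m \<and> (A_half ^^ i) z = 0)
       \<longleftrightarrow> A_half z = 0 \<or> (\<exists>j. 1 \<le> j \<and> j \<le> m \<and> (A_half ^^ j) (A_half z) = 0)"
    by (auto simp: Suc_le_eq gr0_conv_Suc) (metis Suc_le_mono funpow_0 le_SucE One_nat_def not0_implies_Suc)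
  thus ?thesis
    using nicf_depth_le_iff[OF nicf_terminates[OF assms]] A_half_Rats[OF assms(1)] A_half_le
      nicf_depth_le_iff[OF nicf_terminates[of "A_half z"]] \<open>0 \<le> A_half z\<close> by simp
qed

lemma nicf_depth_half: "nicf_depth (1/2) = 1"
proof -
  have "A_half (1/2) = 0" unfolding A_half_def by simp
  hence "nicf_depth (1/2) \<le> 1" unfolding nicf_depth_def by (intro Least_le) simp
  moreover have "\<not> nicf_depth (1/2) \<le> 0" by (rule nicf_depth_pos) auto
  ultimately show ?thesis by simp
qed

section \<open>Jumps of the partial sums\<close>

text \<open>\<open>jump m p q\<close> is the jump of \<open>DeltaM_odd m\<close> at \<open>p/q\<close> in lowest terms; at \<open>0\<close> it is the jump
  of \<open>f_tilde\<close> from \<open>-1\<close> to \<open>1\<close>.\<close>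

definition jump :: "nat \<Rightarrow> int \<Rightarrow> int \<Rightarrow> real" where
  "jump m p q = (if p = 0 then 2 else if nicf_depth \<bar>of_int p / of_int q\<bar> \<le> m then 2 / of_int q else 0)"

text \<open>The invariant behind part (iii), proved by induction on \<open>m\<close> for all \<open>\<bar>r\<bar> \<le> 1/2\<close> at once:
  the one-sided limits of \<open>DeltaM_odd (Suc m)\<close> at \<open>r\<close> are those of \<open>DeltaM_odd m\<close> at
  \<open>nicf_step r\<close>.\<close>

definition has_jump :: "nat \<Rightarrow> real \<Rightarrow> bool" where
  "has_jump m r \<longleftrightarrow> (\<exists>Lp Lm. (DeltaM_odd m \<longlongrightarrow> Lp) (at_right_irr r) \<and> (DeltaM_odd m \<longlongrightarrow> Lm) (at_left_irr r)
     \<and> (r \<notin> \<rat> \<longrightarrow> Lp = DeltaM_odd m r \<and> Lm = DeltaM_odd m r)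
     \<and> (\<forall>p q. 0 < q \<longrightarrow> coprime p q \<longrightarrow> r = of_int p / of_int q \<longrightarrow> Lp - Lm = jump m p q))"

lemma has_jump_0: "has_jump m 0"
  unfolding has_jump_def
proof (intro exI conjI)
  show "(DeltaM_odd m \<longlongrightarrow> 1) (at_right_irr 0)" by (rule DeltaM_odd_tendsto_at_right_irr_0)
  show "(DeltaM_odd m \<longlongrightarrow> -1) (at_left_irr 0)"
    using odd_tendsto_at_left_irr[OF DeltaM_odd_minus DeltaM_odd_tendsto_at_right_irr_0] by simp
qed (auto simp: jump_def)

lemma has_jump_minus: assumes "has_jump m r" shows "has_jump m (- r)"
proof -
  obtain Lp Lm where lim: "(DeltaM_odd m \<longlongrightarrow> Lp) (at_right_irr r)" "(DeltaM_odd m \<longlongrightarrow> Lm) (at_left_irr r)"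
    and irr: "r \<notin> \<rat> \<longrightarrow> Lp = DeltaM_odd m r \<and> Lm = DeltaM_odd m r"
    and J: "\<And>p q. 0 < q \<Longrightarrow> coprime p q \<Longrightarrow> r = of_int p / of_int q \<Longrightarrow> Lp - Lm = jump m p q"
    using assms unfolding has_jump_def by blast
  show ?thesis unfolding has_jump_def
  proof (intro exI conjI allI impI)
    show "(DeltaM_odd m \<longlongrightarrow> - Lm) (at_right_irr (- r))" by (rule odd_tendsto_at_right_irr[OF DeltaM_odd_minus lim(2)])
    show "(DeltaM_odd m \<longlongrightarrow> - Lp) (at_left_irr (- r))" by (rule odd_tendsto_at_left_irr[OF DeltaM_odd_minus lim(1)])
    show "- Lm = DeltaM_odd m (- r)" "- Lp = DeltaM_odd m (- r)" if "- r \<notin> \<rat>"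
      using irr that by (simp_all add: DeltaM_odd_minus)
    fix p q :: int assume pq: "0 < q" "coprime p q" "- r = of_int p / of_int q"
    have "r = of_int (- p) / of_int q" using pq(3) by simp
    hence "Lp - Lm = jump m (- p) q" using J pq by simp
    moreover have "jump m (- p) q = jump m p q" unfolding jump_def by simp
    ultimately show "- Lm - - Lp = jump m p q" by simp
  qed
qed

lemma pos_of_int_div: fixes p q :: int assumes "0 < (of_int p / of_int q :: real)" "0 < q" shows "0 < p"
  using assms by (simp add: zero_less_divide_iff)

lemma has_jump_0_pos: assumes "0 < r" "r \<le> 1/2" shows "has_jump 0 r"
  unfolding has_jump_def
proof (intro exI conjI)
  show "(DeltaM_odd 0 \<longlongrightarrow> f_tilde r) (at_right_irr r)" using f_tilde_tendsto[OF assms] by (simp add: DeltaM_odd_0)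
  show "(DeltaM_odd 0 \<longlongrightarrow> f_tilde r) (at_left_irr r)" using f_tilde_tendsto[OF assms] by (simp add: DeltaM_odd_0)
  show "\<forall>p q. 0 < q \<longrightarrow> coprime p q \<longrightarrow> r = of_int p / of_int q \<longrightarrow> f_tilde r - f_tilde r = jump 0 p q"
  proof (intro allI impI)
    fix p q :: int assume pq: "0 < q" "coprime p q" "r = of_int p / of_int q"
    hence "0 < p" using assms pos_of_int_div[of p q] by simp
    moreover have "\<not> nicf_depth r \<le> 0" using nicf_depth_pos[of r] assms pq by simp
    ultimately show "f_tilde r - f_tilde r = jump 0 p q" unfolding jump_def using pq assms by simp
  qed
qed simp

lemma coprime_diff_mult: fixes p q :: int assumes "coprime p q" shows "coprime (q - K * p) p"
proof (rule coprimeI)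
  fix d assume d: "d dvd q - K * p" "d dvd p"
  hence "d dvd q" by (metis dvd_add dvd_mult diff_add_cancel)
  thus "is_unit d" using coprime_common_divisor[OF assms d(2)] by simp
qed

text \<open>The jump of \<open>DeltaM_odd (Suc m)\<close> at \<open>r = p/q\<close> is \<open>r\<close> times the jump of \<open>DeltaM_odd m\<close> at
  \<open>A_half r = (q - K p)/p\<close>, whose depth is one less.\<close>

lemma jump_Suc:
  fixes p q :: int
  assumes "0 < p" "0 < q" "coprime p q" "of_int p / of_int q \<le> (1/2::real)"
  defines "K \<equiv> round (of_int q / of_int p :: real)"
  shows "of_int p / of_int q * jump m (q - K * p) p = jump (Suc m) p q"
proof -
  let ?r = "of_int p / of_int q :: real"
  have A: "A_half ?r = \<bar>of_int (q - K * p) / of_int p\<bar>" unfolding K_def by (rule A_half_of_int_div[OF assms(1)])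
  have depth: "nicf_depth ?r \<le> Suc m \<longleftrightarrow> A_half ?r = 0 \<or> nicf_depth (A_half ?r) \<le> m"
    using assms by (intro nicf_depth_le_Suc_iff) auto
  show ?thesis
  proof (cases "q - K * p = 0")
    case True
    hence "p dvd q" by (metis dvd_triv_right eq_iff_diff_eq_0)
    hence "p = 1" using coprime_common_divisor[OF assms(3) dvd_refl] assms(1) by (simp add: zdvd_imp_le)
    thus ?thesis using True A depth assms by (simp add: jump_def)
  next
    case False
    hence "real_of_int q \<noteq> of_int K * of_int p" by (metis eq_iff_diff_eq_0 of_int_eq_iff of_int_mult)
    hence "A_half ?r \<noteq> 0" using A assms(1) by simp
    thus ?thesis using False A depth assms by (simp add: jump_def)
  qed
qed

lemma jump_Suc_half_integer:
  fixes p q :: int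
  assumes "0 < p" "0 < q" "coprime p q" "of_int p / of_int q \<le> (1/2::real)"
    and "of_int q / of_int p + 1/2 \<in> (\<int> :: real set)"
  shows "jump (Suc m) p q = of_int p / of_int q * (if m = 0 then 0 else 1)"
proof -
  obtain k where "of_int q / of_int p + 1/2 = (of_int k :: real)" using assms(5) by (auto elim: Ints_cases)
  hence "real_of_int (2 * q + p) = real_of_int (2 * k * p)" using assms(1) by (simp add: field_simps)
  hence "2 * q = p * (2 * k - 1)" by (simp only: of_int_eq_iff) (simp add: algebra_simps)
  hence "p dvd 2" using assms(3) by (metis coprime_dvd_mult_left_iff dvd_triv_left)
  moreover have "p \<noteq> 1"
  proof
    assume "p = 1"
    hence "2 * q = 2 * k - 1" using \<open>2 * q = p * (2 * k - 1)\<close> by simp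
    thus False by presburger
  qed
  ultimately have p: "p = 2" using assms(1) zdvd_imp_le[of p 2] by linarith
  have r2: "1 / (of_int p / of_int q) = of_int k - (1/2 :: real)"
    using \<open>of_int q / of_int p + 1/2 = of_int k\<close> by simp
  have "round (of_int k - 1/2 :: real) = k" by (rule round_unique) auto
  hence A: "A_half (of_int p / of_int q) = 1/2" unfolding A_half_eq_abs_round_rem round_rem_def r2 by simp
  have "nicf_depth (of_int p / of_int q) \<le> Suc m
      \<longleftrightarrow> A_half (of_int p / of_int q) = 0 \<or> nicf_depth (A_half (of_int p / of_int q)) \<le> m"
    using assms by (intro nicf_depth_le_Suc_iff) auto
  hence "nicf_depth (of_int p / of_int q) \<le> Suc m \<longleftrightarrow> 1 \<le> m"
    unfolding A nicf_depth_half by simp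
  thus ?thesis unfolding jump_def using p assms by simp
qed

lemma round_rem_eq_ceiling:
  "t + 1/2 \<notin> \<int> \<Longrightarrow> round_rem t = t - of_int (\<lceil>t + 1/2\<rceil> - 1)"
  unfolding round_rem_def round_def by (simp add: ceiling_altdef) (metis Ints_of_int)

lemma has_jump_Suc_generic:
  assumes IH: "has_jump m (round_rem (1 / r))" and r: "0 < r" "r \<le> 1/2" and t: "1 / r + 1/2 \<notin> \<int>"
  shows "has_jump (Suc m) r"
proof -
  define u where "u = round_rem (1 / r)"
  obtain Lp Lm where lim: "(DeltaM_odd m \<longlongrightarrow> Lp) (at_right_irr u)" "(DeltaM_odd m \<longlongrightarrow> Lm) (at_left_irr u)"
    and irr: "u \<notin> \<rat> \<longrightarrow> Lp = DeltaM_odd m u \<and> Lm = DeltaM_odd m u"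
    and J: "\<forall>p q. 0 < q \<longrightarrow> coprime p q \<longrightarrow> u = of_int p / of_int q \<longrightarrow> Lp - Lm = jump m p q"
    using IH unfolding u_def has_jump_def by blast
  show ?thesis unfolding has_jump_def
  proof (rule exI[of _ "f_tilde r - r * Lm"], rule exI[of _ "f_tilde r - r * Lp"], intro conjI allI impI)
    show "(DeltaM_odd (Suc m) \<longlongrightarrow> f_tilde r - r * Lm) (at_right_irr r)"
      using DeltaM_odd_Suc_tendsto_at_right_irr[OF r] lim(2) round_rem_eq_ceiling[OF t] unfolding u_def by simp
    show "(DeltaM_odd (Suc m) \<longlongrightarrow> f_tilde r - r * Lp) (at_left_irr r)"
      using DeltaM_odd_Suc_tendsto_at_left_irr[OF r] lim(1) unfolding u_def by simp
    assume "r \<notin> \<rat>"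
    hence "u \<notin> \<rat>" using irrational_recip_diff unfolding u_def round_rem_def by simp
    moreover have "nicf_step r = u" using r unfolding nicf_step_def u_def by simp
    ultimately have d: "DeltaM_odd (Suc m) r = f_tilde r - r * Lm" and e: "Lp = Lm" using irr by simp_all
    show "f_tilde r - r * Lm = DeltaM_odd (Suc m) r" by (rule d[symmetric])
    show "f_tilde r - r * Lp = DeltaM_odd (Suc m) r" unfolding e by (rule d[symmetric])
  next
    fix p q :: int assume pq: "0 < q" "coprime p q" "r = of_int p / of_int q"
    have p: "0 < p" using r pq pos_of_int_div by blast
    have q: "1 / r = of_int q / of_int p" using pq by simp
    have "u = of_int (q - round (of_int q / of_int p :: real) * p) / of_int p"
      using p unfolding u_def round_rem_def q by (simp add: field_simps)
    hence "Lp - Lm = jump m (q - round (of_int q / of_int p :: real) * p) p"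
      using J p coprime_diff_mult[OF pq(2)] by blast
    thus "f_tilde r - r * Lm - (f_tilde r - r * Lp) = jump (Suc m) p q"
      using jump_Suc[OF p pq(1,2)] pq r by (simp add: algebra_simps)
  qed
qed

text \<open>When \<open>1/r\<close> is a half-integer, \<open>nicf_step\<close> tends to \<open>1/2\<close> from the right of \<open>r\<close> but to
  \<open>-1/2\<close> from the left, so the limits come from the behaviour of \<open>DeltaM_odd m\<close> at \<open>\<plusminus>1/2\<close>.\<close>

lemma has_jump_Suc_half_integer:
  assumes r: "0 < r" "r \<le> 1/2" and t: "1 / r + 1/2 \<in> \<int>"
  shows "has_jump (Suc m) r"
proof -
  have rat: "r \<in> \<rat>"
  proof -
    have "1 / (1 / r + 1/2 - 1/2) \<in> \<rat>"
      using t by (intro Rats_divide Rats_diff) (auto simp: Ints_subset_Rats[THEN subsetD])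
    thus ?thesis by simp
  qed
  have rr: "1 / r - of_int (\<lceil>1 / r + 1/2\<rceil> - 1) = 1/2" "round_rem (1 / r) = - (1/2)"
    using t unfolding round_rem_def round_def by (auto elim!: Ints_cases)
  define a where "a = (if m = 0 then 0 else 1/2 :: real)"
  have "- a = (if m = 0 then 0 else - 1/2)" unfolding a_def by simp
  hence "(DeltaM_odd m \<longlongrightarrow> - a) (at_left_irr (1 / r - of_int (\<lceil>1 / r + 1/2\<rceil> - 1)))"
    using DeltaM_odd_tendsto_at_left_irr_half[of m] unfolding rr by simp
  from DeltaM_odd_Suc_tendsto_at_right_irr[OF r this]
  have right: "(DeltaM_odd (Suc m) \<longlongrightarrow> f_tilde r + r * a) (at_right_irr r)" by simp
  have "- (if m = 0 then 0 else - 1/2) = a" unfolding a_def by simp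
  hence "(DeltaM_odd m \<longlongrightarrow> a) (at_right_irr (round_rem (1 / r)))"
    using odd_tendsto_at_right_irr[OF DeltaM_odd_minus DeltaM_odd_tendsto_at_left_irr_half, of m] unfolding rr
    by (simp only:)
  from DeltaM_odd_Suc_tendsto_at_left_irr[OF r this]
  have left: "(DeltaM_odd (Suc m) \<longlongrightarrow> f_tilde r - r * a) (at_left_irr r)" .
  show ?thesis unfolding has_jump_def
  proof (rule exI[of _ "f_tilde r + r * a"], rule exI[of _ "f_tilde r - r * a"], intro conjI allI impI)
    fix p q :: int assume pq: "0 < q" "coprime p q" "r = of_int p / of_int q"
    hence "jump (Suc m) p q = r * (if m = 0 then 0 else 1)"
      using r t pos_of_int_div[of p q] jump_Suc_half_integer[of p q m] by simp
    thus "f_tilde r + r * a - (f_tilde r - r * a) = jump (Suc m) p q" unfolding a_def by simp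
  qed (use rat right left in auto)
qed

lemma has_jump_Suc:
  assumes "\<And>u. \<bar>u\<bar> \<le> 1/2 \<Longrightarrow> has_jump m u" "0 < r" "r \<le> 1/2"
  shows "has_jump (Suc m) r"
  using assms has_jump_Suc_generic has_jump_Suc_half_integer abs_round_rem_le by blast

lemma has_jump: "\<bar>u\<bar> \<le> 1/2 \<Longrightarrow> has_jump m u"
proof (induction m arbitrary: u)
  case 0
  thus ?case using has_jump_0 has_jump_0_pos has_jump_minus[of 0 "- u"]
    by (cases "0 < u"; cases "u = 0") auto
next
  case (Suc m)
  thus ?case using has_jump_0 has_jump_Suc[OF Suc.IH] has_jump_minus[of "Suc m" "- u"]
    by (cases "0 < u"; cases "u = 0") auto
qed

lemma DeltaM_tendsto_of_DeltaM_odd: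
  assumes "(DeltaM_odd M \<longlongrightarrow> L) (at r within A)" "B - {r} \<subseteq> A" "B \<subseteq> {0..}"
  shows "(DeltaM M \<longlongrightarrow> L) (at r within B)"
proof -
  have "at r within B = at r within (B - {r})" unfolding at_within_def by simp
  hence "(DeltaM_odd M \<longlongrightarrow> L) (at r within B)" using tendsto_within_subset[OF assms(1,2)] by simp
  moreover have "\<forall>\<^sub>F x in at r within B. DeltaM_odd M x = DeltaM M x"
    unfolding eventually_at_filter by (rule always_eventually) (use assms(3) DeltaM_eq_DeltaM_odd in auto)
  ultimately show ?thesis by (simp add: tendsto_cong)
qed

lemma continuous_on_DeltaM: "continuous_on ({0<..<1/2} - \<rat>) (DeltaM M)"
  unfolding continuous_on_def
proof
  fix x :: real assume x: "x \<in> {0<..<1/2} - \<rat>"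
  then have "(DeltaM_odd M \<longlongrightarrow> DeltaM_odd M x) (at_right_irr x)" "(DeltaM_odd M \<longlongrightarrow> DeltaM_odd M x) (at_left_irr x)"
    using has_jump[of x M] unfolding has_jump_def by auto
  hence "(DeltaM_odd M \<longlongrightarrow> DeltaM_odd M x) (at x within (- \<rat> \<inter> {x<..} \<union> - \<rat> \<inter> {..<x}))"
    by (simp add: Lim_within_Un)
  hence "(DeltaM M \<longlongrightarrow> DeltaM_odd M x) (at x within ({0<..<1/2} - \<rat>))"
    by (rule DeltaM_tendsto_of_DeltaM_odd) auto
  thus "(DeltaM M \<longlongrightarrow> DeltaM M x) (at x within ({0<..<1/2} - \<rat>))"
    using x DeltaM_eq_DeltaM_odd by simp
qed

lemma DeltaM_tendsto_deep_rational:
  assumes "r \<in> \<rat>" "0 < r" "r < 1/2" "M < nicf_depth r"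
  shows "\<exists>L. (DeltaM M \<longlongrightarrow> L) (at r within ({0<..<1/2} - \<rat>))"
proof -
  obtain p q where pq: "0 < q" "coprime p q" "r = of_int p / of_int q" using assms(1) by (rule Rats_cases')
  have "has_jump M r" using assms by (intro has_jump) simp
  then obtain Lp Lm where L: "(DeltaM_odd M \<longlongrightarrow> Lp) (at_right_irr r)" "(DeltaM_odd M \<longlongrightarrow> Lm) (at_left_irr r)"
    and J: "\<forall>p q. 0 < q \<longrightarrow> coprime p q \<longrightarrow> r = of_int p / of_int q \<longrightarrow> Lp - Lm = jump M p q"
    unfolding has_jump_def by blast
  have "Lp - Lm = jump M p q" using J pq by blast
  also have "jump M p q = 0" using assms pq pos_of_int_div[of p q] unfolding jump_def by auto
  finally have "(DeltaM_odd M \<longlongrightarrow> Lp) (at r within (- \<rat> \<inter> {r<..} \<union> - \<rat> \<inter> {..<r}))"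
    using L by (simp add: Lim_within_Un)
  hence "(DeltaM M \<longlongrightarrow> Lp) (at r within ({0<..<1/2} - \<rat>))"
    by (rule DeltaM_tendsto_of_DeltaM_odd) auto
  thus ?thesis by blast
qed

lemma DeltaM_jump_rational:
  fixes p q :: int
  defines "r \<equiv> real_of_int p / of_int q"
  assumes "0 < q" "coprime p q" "0 < r" "r < 1/2" "nicf_depth r \<le> M"
  shows "\<exists>Lp Lm. (DeltaM M \<longlongrightarrow> Lp) (at r within (({0<..<1/2} - \<rat>) \<inter> {r<..}))
    \<and> (DeltaM M \<longlongrightarrow> Lm) (at r within (({0<..<1/2} - \<rat>) \<inter> {..<r}))
    \<and> Lp - Lm = 2 / real_of_int q"
proof -
  have p: "0 < p" using assms pos_of_int_div by blast
  have "\<bar>r\<bar> \<le> 1/2" using assms p by simp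
  then obtain Lp Lm where L: "(DeltaM_odd M \<longlongrightarrow> Lp) (at_right_irr r)" "(DeltaM_odd M \<longlongrightarrow> Lm) (at_left_irr r)"
    and J: "\<forall>p q. 0 < q \<longrightarrow> coprime p q \<longrightarrow> r = of_int p / of_int q \<longrightarrow> Lp - Lm = jump M p q"
    using has_jump unfolding has_jump_def by blast
  have "Lp - Lm = jump M p q" using J assms unfolding r_def by blast
  moreover have "jump M p q = 2 / of_int q"
    using assms p unfolding jump_def by auto
  moreover have "(DeltaM M \<longlongrightarrow> Lp) (at r within (({0<..<1/2} - \<rat>) \<inter> {r<..}))"
    by (rule DeltaM_tendsto_of_DeltaM_odd[OF L(1)]) auto
  moreover have "(DeltaM M \<longlongrightarrow> Lm) (at r within (({0<..<1/2} - \<rat>) \<inter> {..<r}))"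
    by (rule DeltaM_tendsto_of_DeltaM_odd[OF L(2)]) auto
  ultimately show ?thesis by auto
qed

section \<open>The Gauss map and the Brjuno, semi-Brjuno and Wilton series\<close>

lemma gaussA_eq_frac: "gaussA y = frac (1 / y)"
  unfolding gaussA_def frac_def ..

lemma gaussA_range: "0 \<le> gaussA y" "gaussA y < 1"
  unfolding gaussA_eq_frac by (simp_all add: frac_lt_1)

lemma gaussA0_eq: "gaussA0 y = 1 - gaussA y"
  unfolding gaussA0_def gaussA_def by (simp add: one_add_floor[symmetric, of "1 / y"] add.commute)

lemma gaussA0_range: "0 < gaussA0 y" "gaussA0 y \<le> 1"
  unfolding gaussA0_eq using gaussA_range[of y] by auto

lemma gaussA_irrational: assumes "y \<notin> \<rat>" shows "gaussA y \<notin> \<rat>" "0 < gaussA y"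
proof -
  show irr: "gaussA y \<notin> \<rat>" unfolding gaussA_def using irrational_recip_diff[OF assms] .
  show "0 < gaussA y" using gaussA_range(1)[of y] irr by (cases "gaussA y = 0") auto
qed

lemma irrational_one_minus: fixes y :: real shows "y \<notin> \<rat> \<Longrightarrow> 1 - y \<notin> \<rat>"
  using Rats_diff[OF Rats_1, of "1 - y"] by auto

lemma irrational_neq_half: fixes z :: real shows "z \<notin> \<rat> \<Longrightarrow> z \<noteq> 1/2"
  by (metis Rats_divide Rats_1 Rats_number_of numeral_One)

lemma funpow_Suc_apply: "(f ^^ Suc k) z = (f ^^ k) (f z)"
  by (simp only: funpow_Suc_right comp_def)

lemma B_term_Suc: "0 \<le> z \<Longrightarrow> z < 1 \<Longrightarrow> B_term z (Suc j) = z * B_term (gaussA z) j"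
  unfolding B_term_def using gaussA_range[of z]
  by (simp del: prod.lessThan_Suc funpow.simps add: prod.lessThan_Suc_shift funpow_Suc_apply frac_eq)

lemma W_term_Suc: "0 \<le> z \<Longrightarrow> z < 1 \<Longrightarrow> W_term z (Suc j) = - z * W_term (gaussA z) j"
  unfolding W_term_def using gaussA_range[of z]
  by (simp del: prod.lessThan_Suc funpow.simps add: prod.lessThan_Suc_shift funpow_Suc_apply frac_eq)

lemma B0_term_Suc:
  "0 \<le> z \<Longrightarrow> z < 1 \<Longrightarrow> gaussA0 z < 1 \<Longrightarrow> B0_term z (Suc j) = z * B0_term (gaussA0 z) j"
  unfolding B0_term_def using gaussA0_range[of z]
  by (simp del: prod.lessThan_Suc funpow.simps add: prod.lessThan_Suc_shift funpow_Suc_apply frac_eq)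

lemma B_term_0: "B_term z 0 = ln (1 / frac z)"
  and W_term_0: "W_term z 0 = ln (1 / frac z)"
  and B0_term_0: "B0_term z 0 = ln (1 / frac z)"
  unfolding B_term_def W_term_def B0_term_def by simp_all

lemma terms_frac_cong:
  "frac a = frac b \<Longrightarrow> B_term a = B_term b \<and> W_term a = W_term b \<and> B0_term a = B0_term b"
  unfolding B_term_def[abs_def] W_term_def[abs_def] B0_term_def[abs_def] by simp

lemma ln_inverse_nonneg: fixes y :: real shows "0 \<le> y \<Longrightarrow> y \<le> 1 \<Longrightarrow> 0 \<le> ln (1 / y)"
  by (cases "y = 0") auto

lemma B_term_nonneg: "0 \<le> B_term z j"
proof -
  have "0 \<le> (gaussA ^^ k) (frac z) \<and> (gaussA ^^ k) (frac z) < 1" for k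
    by (cases k) (auto simp: gaussA_range frac_lt_1)
  thus ?thesis unfolding B_term_def
    by (intro mult_nonneg_nonneg prod_nonneg ln_inverse_nonneg) (auto intro: less_imp_le)
qed

lemma B0_term_nonneg: "0 \<le> B0_term z j"
proof -
  have "0 \<le> (gaussA0 ^^ k) (frac z) \<and> (gaussA0 ^^ k) (frac z) \<le> 1" for k
    by (cases k) (auto simp: gaussA0_range frac_lt_1 less_imp_le)
  thus ?thesis unfolding B0_term_def by (intro mult_nonneg_nonneg prod_nonneg ln_inverse_nonneg) auto
qed

lemma brjunoB_nonneg: "summable (B_term z) \<Longrightarrow> 0 \<le> brjunoB z"
  unfolding brjunoB_def by (intro suminf_nonneg B_term_nonneg)

lemma summable_W_term: assumes "summable (B_term z)" shows "summable (W_term z)" "\<bar>wiltonW z\<bar> \<le> brjunoB z"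
proof -
  have "\<bar>W_term z j\<bar> = \<bar>B_term z j\<bar>" for j unfolding W_term_def B_term_def by (simp add: abs_mult)
  hence n: "norm (W_term z j) = B_term z j" for j using B_term_nonneg[of z j] by simp
  hence "summable (\<lambda>j. norm (W_term z j))" using assms by simp
  thus "summable (W_term z)" by (rule summable_norm_cancel)
  show "\<bar>wiltonW z\<bar> \<le> brjunoB z"
    using summable_norm[OF \<open>summable (\<lambda>j. norm (W_term z j))\<close>] unfolding wiltonW_def brjunoB_def n by simp
qed

lemma gaussA_one_minus: assumes "0 < x" "x < 1/2" shows "gaussA (1 - x) = x / (1 - x)"
proof -
  have "\<lfloor>1 / (1 - x)\<rfloor> = 1" using assms by (intro floor_unique) (auto simp: field_simps)
  thus ?thesis unfolding gaussA_def using assms by (simp add: field_simps)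
qed

lemma gaussA_div_one_minus: assumes "0 < x" "x < 1/2" shows "gaussA (x / (1 - x)) = gaussA x"
proof -
  have "1 / (x / (1 - x)) = 1 / x + of_int (- 1)" using assms by (simp add: field_simps)
  thus ?thesis unfolding gaussA_eq_frac by (simp only: frac_def floor_add_int) simp
qed

text \<open>For \<open>x < 1/2\<close> the Gauss orbit of \<open>1 - x\<close> rejoins that of \<open>x\<close> after two steps.\<close>

lemma B_term_one_minus:
  assumes "0 < x" "x < 1/2"
  shows "B_term (1 - x) (Suc (Suc j)) = x * B_term (gaussA x) j"
    and "B_term (1 - x) 0 + B_term (1 - x) 1 = ln (1 / (1 - x)) + (1 - x) * ln ((1 - x) / x)"
proof -
  have y: "0 \<le> x / (1 - x)" "x / (1 - x) < 1" using assms by (auto simp: field_simps)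
  have "B_term (1 - x) (Suc j) = (1 - x) * B_term (x / (1 - x)) j" for j
    using B_term_Suc[of "1 - x"] assms gaussA_one_minus[OF assms] by simp
  thus "B_term (1 - x) (Suc (Suc j)) = x * B_term (gaussA x) j"
    "B_term (1 - x) 0 + B_term (1 - x) 1 = ln (1 / (1 - x)) + (1 - x) * ln ((1 - x) / x)"
    using B_term_Suc[OF y] gaussA_div_one_minus[OF assms] assms y
    by (simp_all add: B_term_0 frac_eq)
qed

lemma W_term_one_minus:
  assumes "0 < x" "x < 1/2"
  shows "W_term (1 - x) (Suc (Suc j)) = x * W_term (gaussA x) j"
    and "W_term (1 - x) 0 + W_term (1 - x) 1 = ln (1 / (1 - x)) - (1 - x) * ln ((1 - x) / x)"
proof -
  have y: "0 \<le> x / (1 - x)" "x / (1 - x) < 1" using assms by (auto simp: field_simps)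
  have s1: "W_term (1 - x) (Suc j) = - (1 - x) * W_term (x / (1 - x)) j" for j
    using W_term_Suc[of "1 - x"] assms gaussA_one_minus[OF assms] by simp
  have s2: "W_term (x / (1 - x)) (Suc j) = - (x / (1 - x)) * W_term (gaussA x) j" for j
    using W_term_Suc[OF y] gaussA_div_one_minus[OF assms] by simp
  show "W_term (1 - x) (Suc (Suc j)) = x * W_term (gaussA x) j"
    unfolding s1 s2 using assms by (simp add: field_simps)
  show "W_term (1 - x) 0 + W_term (1 - x) 1 = ln (1 / (1 - x)) - (1 - x) * ln ((1 - x) / x)"
    using s1[of 0] y assms by (simp add: W_term_0 frac_eq algebra_simps)
qed

lemma summable_B_term_gaussA_iff:
  assumes "0 < z" "z < 1" shows "summable (B_term z) \<longleftrightarrow> summable (B_term (gaussA z))"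
proof -
  have "summable (B_term z) \<longleftrightarrow> summable (\<lambda>j. z * B_term (gaussA z) j)"
    using summable_Suc_iff[of "B_term z"] B_term_Suc assms by simp
  thus ?thesis using assms by (simp add: summable_cmult_iff)
qed

lemma summable_B_term_one_minus_iff:
  assumes "0 < x" "x < 1/2" shows "summable (B_term (1 - x)) \<longleftrightarrow> summable (B_term x)"
proof -
  have "summable (B_term (1 - x)) \<longleftrightarrow> summable (\<lambda>j. B_term (1 - x) (Suc (Suc j)))"
    using summable_Suc_iff[of "\<lambda>j. B_term (1 - x) (Suc j)"] summable_Suc_iff[of "B_term (1 - x)"] by simp
  also have "\<dots> \<longleftrightarrow> summable (B_term (gaussA x))"
    using B_term_one_minus(1)[OF assms] assms by (simp add: summable_cmult_iff)
  finally show ?thesis using summable_B_term_gaussA_iff assms by simp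
qed

definition brjuno01 :: "real \<Rightarrow> bool" where
  "brjuno01 z \<longleftrightarrow> brjuno z \<and> 0 < z \<and> z < 1"

lemma brjuno01D: "brjuno01 z \<Longrightarrow> 0 < z \<and> z < 1 \<and> z \<notin> \<rat> \<and> summable (B_term z)"
  unfolding brjuno01_def brjuno_def by simp

lemma brjuno01_gaussA: "brjuno01 z \<Longrightarrow> brjuno01 (gaussA z)"
  unfolding brjuno01_def brjuno_def using summable_B_term_gaussA_iff gaussA_irrational gaussA_range by auto

lemma brjuno01_one_minus: assumes "brjuno01 z" shows "brjuno01 (1 - z)"
proof -
  note z = brjuno01D[OF assms]
  have "z \<noteq> 1/2" using irrational_neq_half z by auto
  hence "summable (B_term (1 - z))"
    using summable_B_term_one_minus_iff[of z] summable_B_term_one_minus_iff[of "1 - z"] z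
    by (cases "z < 1/2") auto
  thus ?thesis using z irrational_one_minus[of z] unfolding brjuno01_def brjuno_def by auto
qed

lemma frac_minus_unit: "0 < x \<Longrightarrow> x < 1 \<Longrightarrow> frac (- x) = 1 - x"
  using frac_neg[of x] frac_eq[of x] by (auto simp: Ints_def)

lemma Delta_minus_unit:
  "0 < x \<Longrightarrow> x < 1 \<Longrightarrow> Delta_minus x = (wiltonW x - wiltonW (1 - x)) / 2 - (brjunoB0 x - brjunoB0 (1 - x))"
  using terms_frac_cong[of "- x" "1 - x"] frac_minus_unit[of x]
  unfolding Delta_minus_def wiltonW_def brjunoB0_def by (simp add: frac_eq)

lemma Delta_minus_add_of_int: "Delta_minus (y + of_int k) = Delta_minus y"
proof -
  have "frac (y + of_int k) = frac y" "frac (- (y + of_int k)) = frac (- y + of_int (- k))"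
    by (simp_all add: frac_def)
  hence "frac (y + of_int k) = frac y" "frac (- (y + of_int k)) = frac (- y)" by (simp_all add: frac_def)
  thus ?thesis unfolding Delta_minus_def wiltonW_def brjunoB0_def
    using terms_frac_cong by metis
qed

lemma Delta_minus_minus: "Delta_minus (- y) = - Delta_minus y"
  unfolding Delta_minus_def by (simp add: field_simps)

lemma sums_from_shift: fixes f :: "nat \<Rightarrow> real" shows "(\<lambda>j. f (j + k)) sums s \<Longrightarrow> f sums (s + sum f {..<k})"
  by (simp only: sums_iff_shift)

lemma brjunoB_eq:
  assumes "brjuno01 z" shows "brjunoB z = ln (1 / z) + z * brjunoB (gaussA z)"
proof -
  note z = brjuno01D[OF assms] and g = brjuno01D[OF brjuno01_gaussA[OF assms]]
  have "(\<lambda>j. B_term z (j + 1)) sums (z * brjunoB (gaussA z))"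
    using B_term_Suc z unfolding brjunoB_def by (simp add: sums_mult summable_sums g)
  from sums_from_shift[OF this] show ?thesis
    using z unfolding brjunoB_def by (simp add: sums_iff B_term_0 frac_eq add.commute)
qed

lemma wiltonW_eq:
  assumes "brjuno01 z" shows "wiltonW z = ln (1 / z) - z * wiltonW (gaussA z)"
proof -
  note z = brjuno01D[OF assms] and g = brjuno01D[OF brjuno01_gaussA[OF assms]]
  have "W_term (gaussA z) sums wiltonW (gaussA z)"
    using summable_W_term(1)[of "gaussA z"] g unfolding wiltonW_def by (simp add: summable_sums)
  hence "(\<lambda>j. - z * W_term (gaussA z) j) sums (- z * wiltonW (gaussA z))" by (rule sums_mult)
  hence "(\<lambda>j. W_term z (j + 1)) sums (- z * wiltonW (gaussA z))" using W_term_Suc z by simp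
  from sums_from_shift[OF this] show ?thesis
    using z unfolding wiltonW_def by (simp add: sums_iff W_term_0 frac_eq)
qed

lemma brjunoB_one_minus_eq:
  assumes "brjuno01 x" "x < 1/2"
  shows "brjunoB (1 - x) = ln (1 / (1 - x)) + (1 - x) * ln ((1 - x) / x) + x * brjunoB (gaussA x)"
proof -
  note x = brjuno01D[OF assms(1)] and g = brjuno01D[OF brjuno01_gaussA[OF assms(1)]]
  have "(\<lambda>j. B_term (1 - x) (j + 2)) sums (x * brjunoB (gaussA x))"
    using B_term_one_minus(1) x assms(2) g unfolding brjunoB_def
    by (simp add: numeral_2_eq_2 sums_mult summable_sums)
  from sums_from_shift[OF this] show ?thesis
    using B_term_one_minus(2) x assms(2) unfolding brjunoB_def by (simp add: sums_iff numeral_2_eq_2)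
qed

lemma wiltonW_one_minus_eq:
  assumes "brjuno01 x" "x < 1/2"
  shows "wiltonW (1 - x) = ln (1 / (1 - x)) - (1 - x) * ln ((1 - x) / x) + x * wiltonW (gaussA x)"
proof -
  note x = brjuno01D[OF assms(1)] and g = brjuno01D[OF brjuno01_gaussA[OF assms(1)]]
  have "(\<lambda>j. W_term (1 - x) (j + 2)) sums (x * wiltonW (gaussA x))"
    using W_term_one_minus(1) x assms(2) summable_W_term(1)[of "gaussA x"] g unfolding wiltonW_def
    by (simp add: numeral_2_eq_2 sums_mult summable_sums)
  from sums_from_shift[OF this] show ?thesis
    using W_term_one_minus(2) x assms(2) unfolding wiltonW_def by (simp add: sums_iff numeral_2_eq_2)
qed

lemma abs_brjunoB_one_minus_diff_le:
  assumes "brjuno01 u" shows "\<bar>brjunoB (1 - u) - brjunoB u\<bar> \<le> 1/2"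
proof -
  have half: "\<bar>brjunoB (1 - x) - brjunoB x\<bar> \<le> 1/2" if x: "brjuno01 x" "x < 1/2" for x
  proof -
    have x01: "0 < x" "x < 1" using brjuno01D[OF x(1)] by auto
    have "brjunoB (1 - x) - brjunoB x = xlnx x - x * ln (1 - x)"
      unfolding brjunoB_one_minus_eq[OF x] brjunoB_eq[OF x(1)] xlnx_def
      using x01 by (simp add: ln_div algebra_simps)
    moreover have "\<bar>xlnx x\<bar> \<le> 1/2" "xlnx x \<le> 0"
      using abs_xlnx_le_half[of x] x01 by (auto simp: xlnx_def mult_nonneg_nonpos)
    moreover have "x * \<bar>ln (1 - x)\<bar> \<le> x * (2 * x)"
      using abs_ln_one_minus_le[of x] x x01 by (intro mult_left_mono) auto
    moreover have "x * (2 * x) \<le> 1/2" using mult_mono[of x "1/2" "2*x" 1] x x01 by simp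
    moreover have "x * ln (1 - x) \<le> 0" using x x01 by (simp add: mult_nonneg_nonpos)
    ultimately show ?thesis using x01 by (intro abs_leI) (simp_all add: abs_mult)
  qed
  note u = brjuno01D[OF assms]
  have "u \<noteq> 1/2" using irrational_neq_half u by auto
  thus ?thesis using half[OF assms] half[OF brjuno01_one_minus[OF assms]]
    by (cases "u < 1/2") (auto simp: abs_minus_commute)
qed

section \<open>The semi-Brjuno series of \<open>1 - x\<close>\<close>

text \<open>Starting from \<open>1 - x\<close>, the map \<open>gaussA0\<close> runs through \<open>v k = (1 - (k+1)x)/(1 - kx)\<close> for
  \<open>n = \<lfloor>1/x\<rfloor>\<close> steps and then continues with \<open>gaussA0 (gaussA x)\<close>; the first \<open>n\<close> terms of
  \<open>B0_term (1 - x)\<close> telescope to \<open>x ln (1 / gaussA x) - \<Phi> x\<close>.\<close>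

locale irrational_below_half =
  fixes x :: real
  assumes pos: "0 < x" and below_half: "x < 1/2" and irrational: "x \<notin> \<rat>"
begin

definition n :: nat where "n = nat \<lfloor>1 / x\<rfloor>"

lemma n_facts: "n \<ge> 2" "real n * x < 1" "1 < (real n + 1) * x" "x * gaussA x = 1 - real n * x"
proof -
  note f = floor_recip_facts[of x, folded n_def]
  show n2: "n \<ge> 2" "1 < (real n + 1) * x" using f pos below_half by auto
  show "x * gaussA x = 1 - real n * x" using mult_gaussA[of x] f pos below_half by simp
  have "real n * x \<noteq> 1"
  proof
    assume "real n * x = 1"
    hence "x = 1 / real n" using n2 by (simp add: field_simps)
    moreover have "1 / real n \<in> \<rat>" by (intro Rats_divide Rats_1 Rats_of_nat)
    ultimately show False using irrational by simp
  qed
  thus "real n * x < 1" using f pos below_half by simp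
qed

lemma gaussA_facts: "0 < gaussA x" "gaussA x < 1" "gaussA x \<notin> \<rat>"
  using gaussA_irrational[OF irrational] gaussA_range[of x] by auto

definition v :: "nat \<Rightarrow> real" where "v k = (1 - (real k + 1) * x) / (1 - real k * x)"

lemma one_minus_pos: assumes "k \<le> n" shows "0 < 1 - real k * x"
proof -
  have "real k * x \<le> real n * x" using assms pos by (intro mult_right_mono) auto
  thus ?thesis using n_facts(2) by simp
qed

lemma v_range: "k + 1 \<le> n \<Longrightarrow> 0 \<le> v k \<and> v k < 1"
  using one_minus_pos[of "k + 1"] one_minus_pos[of k] pos unfolding v_def by (simp add: field_simps)

lemma gaussA0_v: assumes "k + 2 \<le> n" shows "gaussA0 (v k) = v (k + 1)"
proof -
  have a: "0 < 1 - (real k + 2) * x" "0 < 1 - (real k + 1) * x" "0 < 1 - real k * x"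
    using one_minus_pos[of "k + 2"] one_minus_pos[of "k + 1"] one_minus_pos[of k] assms
    by (simp_all add: algebra_simps)
  have e: "1 / v k = 1 + x / (1 - (real k + 1) * x)" unfolding v_def using a by (simp add: field_simps)
  have "0 < x / (1 - (real k + 1) * x)" "x / (1 - (real k + 1) * x) < 1"
    using pos a by (simp_all add: field_simps)
  hence "\<lfloor>1 / v k + 1\<rfloor> = 2" unfolding e by (intro floor_unique) auto
  hence "gaussA0 (v k) = 2 - (1 + x / (1 - (real k + 1) * x))" unfolding gaussA0_def e by simp
  also have "\<dots> = v (k + 1)" unfolding v_def using a by (simp add: field_simps)
  finally show ?thesis .
qed

lemma B0_term_one_minus_add:
  "k + 1 \<le> n \<Longrightarrow> B0_term (1 - x) (k + j) = (1 - real k * x) * B0_term (v k) j"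
proof (induction k arbitrary: j)
  case 0
  have "v 0 = 1 - x" unfolding v_def by simp
  thus ?case by simp
next
  case (Suc k)
  have "B0_term (1 - x) (Suc k + j) = (1 - real k * x) * B0_term (v k) (Suc j)"
    using Suc.IH[of "Suc j"] Suc.prems by simp
  also have "\<dots> = (1 - real k * x) * v k * B0_term (v (Suc k)) j"
    using B0_term_Suc[of "v k" j] v_range[of k] v_range[of "Suc k"] gaussA0_v[of k] Suc.prems by simp
  also have "(1 - real k * x) * v k = 1 - real (Suc k) * x"
    unfolding v_def using one_minus_pos[of k] Suc.prems by (simp add: field_simps)
  finally show ?case .
qed

lemma B0_term_one_minus_head:
  "k < n \<Longrightarrow> B0_term (1 - x) k = (1 - real k * x) * ln ((1 - real k * x) / (1 - (real k + 1) * x))"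
  using B0_term_one_minus_add[of k 0] v_range[of k] by (simp add: B0_term_0 frac_eq v_def)

lemma B0_term_one_minus_tail: "B0_term (1 - x) (n + j) = x * B0_term (gaussA x) (Suc j)"
proof -
  obtain k where k: "n = Suc k" using n_facts by (cases n) auto
  have p: "0 < 1 - real n * x" "0 < 1 - real k * x" using n_facts one_minus_pos[of k] k by simp_all
  have "1 / v k = 1 + 1 / gaussA x"
    using n_facts(4) p pos gaussA_facts unfolding v_def k by (simp add: field_simps)
  hence "gaussA0 (v k) = gaussA0 (gaussA x)"
    unfolding gaussA0_def by (simp add: add.assoc floor_add_int[of _ 1, simplified] add.commute)
  moreover have g0: "0 \<le> gaussA0 (gaussA x)" "gaussA0 (gaussA x) < 1"
    using gaussA_irrational(2)[OF gaussA_facts(3)] gaussA_range[of "gaussA x"] unfolding gaussA0_eq by simp_all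
  moreover have "(1 - real k * x) * v k = 1 - real n * x" unfolding v_def k using p(2) by simp
  hence "(1 - real k * x) * v k = x * gaussA x" using n_facts(4) by simp
  ultimately have "B0_term (1 - x) (k + Suc j) = x * gaussA x * B0_term (gaussA0 (gaussA x)) j"
    using B0_term_one_minus_add[of k "Suc j"] B0_term_Suc[of "v k" j] v_range[of k] k by simp
  thus ?thesis using B0_term_Suc[of "gaussA x" j] gaussA_facts g0 k by simp
qed

lemma sum_B0_term_one_minus_head: "(\<Sum>k<n. B0_term (1 - x) k) = x * ln (1 / gaussA x) - Phi x"
proof -
  obtain L where L: "n = Suc L" using n_facts by (cases n) auto
  have telescope: "(\<Sum>k<Suc l. (1 - real k * x) * ln ((1 - real k * x) / (1 - (real k + 1) * x)))
    = - x * (\<Sum>k=1..l. ln (1 - real k * x)) - (1 - real l * x) * ln (1 - (real l + 1) * x)"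
    if "Suc l \<le> n" for l
    using that
  proof (induction l)
    case 0 thus ?case using below_half by (simp add: ln_div)
  next
    case (Suc l)
    have "0 < 1 - (real l + 1) * x" "0 < 1 - (real l + 2) * x"
      using one_minus_pos[of "Suc l"] one_minus_pos[of "Suc (Suc l)"] Suc.prems by (simp_all add: algebra_simps)
    thus ?case using Suc by (simp add: ln_div sum.cl_ivl_Suc algebra_simps)
  qed
  have "(\<Sum>k<n. B0_term (1 - x) k)
      = - x * (\<Sum>k=1..L. ln (1 - real k * x)) - (1 - real L * x) * ln (1 - (real L + 1) * x)"
    using telescope[of L] B0_term_one_minus_head L by simp
  also have "\<dots> = x * ln (1 / gaussA x) - Phi x"
  proof -
    have "nat \<lfloor>1 / x\<rfloor> - 1 = L" using L unfolding n_def by simp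
    hence "Phi x = x * ln x + x * gaussA x * ln (x * gaussA x) + x * (\<Sum>j=1..L. ln (1 - real j * x))"
      unfolding Phi_def by simp
    moreover have "ln (x * gaussA x) = ln x + ln (gaussA x)" using pos gaussA_facts by (simp add: ln_mult)
    ultimately have "x * ln (1 / gaussA x) - Phi x
        = - (x + x * gaussA x) * ln (x * gaussA x) - x * (\<Sum>j=1..L. ln (1 - real j * x))"
      using gaussA_facts by (simp add: ln_div algebra_simps)
    moreover have "x * gaussA x = 1 - (real L + 1) * x" using n_facts(4) L by simp
    ultimately show ?thesis by (simp add: algebra_simps)
  qed
  finally show ?thesis .
qed

lemma B0_term_one_minus_sums:
  assumes "summable (B0_term (gaussA x))" shows "B0_term (1 - x) sums (x * brjunoB0 (gaussA x) - Phi x)"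
proof -
  have "B0_term (gaussA x) sums brjunoB0 (gaussA x)" unfolding brjunoB0_def by (rule summable_sums[OF assms])
  hence "(\<lambda>j. B0_term (gaussA x) (j + 1)) sums (brjunoB0 (gaussA x) - sum (B0_term (gaussA x)) {..<1})"
    by (simp only: sums_iff_shift')
  hence "(\<lambda>j. B0_term (gaussA x) (j + 1)) sums (brjunoB0 (gaussA x) - ln (1 / gaussA x))"
    using gaussA_facts by (simp add: B0_term_0 frac_eq)
  hence "(\<lambda>j. B0_term (1 - x) (j + n)) sums (x * (brjunoB0 (gaussA x) - ln (1 / gaussA x)))"
    using B0_term_one_minus_tail by (simp add: add.commute sums_mult)
  from sums_from_shift[OF this] show ?thesis
    unfolding sum_B0_term_one_minus_head by (simp add: algebra_simps)
qed

end

section \<open>Convergence of the semi-Brjuno series\<close>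

lemma sum_lessThan_add:
  fixes f :: "nat \<Rightarrow> 'a::comm_monoid_add" shows "sum f {..<n + m} = sum f {..<n} + (\<Sum>i<m. f (n + i))"
  by (induction m) (auto simp: add.assoc)

lemma ln_inverse_le_brjunoB: assumes "brjuno01 z" shows "ln (1 / z) \<le> brjunoB z"
proof -
  have "0 \<le> z * brjunoB (gaussA z)"
    using brjuno01D[OF assms] brjunoB_nonneg brjuno01D[OF brjuno01_gaussA[OF assms]] by simp
  thus ?thesis using brjunoB_eq[OF assms] by simp
qed

lemma B0_partial_sum_le_below_half:
  assumes IH: "\<And>z. brjuno01 z \<Longrightarrow> (\<Sum>j<N. B0_term z j) \<le> 5 + 5 * brjunoB z"
    and z: "brjuno01 z" "z < 1/2"
  shows "(\<Sum>j<Suc N. B0_term z j) \<le> 5 + 5 * brjunoB z"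
proof -
  note zf = brjuno01D[OF z(1)]
  have ln_nonneg: "0 \<le> ln (1 / z)" using zf by (intro ln_inverse_nonneg) auto
  define w where "w = 1 - gaussA z"
  have bw: "brjuno01 w" unfolding w_def by (rule brjuno01_one_minus[OF brjuno01_gaussA[OF z(1)]])
  have "brjunoB w \<le> brjunoB (gaussA z) + 1/2"
    using abs_brjunoB_one_minus_diff_le[OF brjuno01_gaussA[OF z(1)]] unfolding w_def by linarith
  have "(\<Sum>j<Suc N. B0_term z j) = ln (1 / z) + z * (\<Sum>j<N. B0_term w j)"
    using B0_term_Suc[of z] zf brjuno01D[OF bw] unfolding sum.lessThan_Suc_shift
    by (simp add: B0_term_0 frac_eq sum_distrib_left w_def gaussA0_eq)
  also have "\<dots> \<le> ln (1 / z) + z * (5 + 5 * (brjunoB (gaussA z) + 1/2))"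
    using IH[OF bw] \<open>brjunoB w \<le> _\<close> zf by (intro add_left_mono mult_left_mono) auto
  also have "\<dots> = ln (1 / z) + 15/2 * z + 5 * (brjunoB z - ln (1 / z))"
    using brjunoB_eq[OF z(1)] by (simp add: algebra_simps)
  also have "\<dots> \<le> 5 + 5 * brjunoB z" using ln_nonneg z(2) by simp
  finally show ?thesis .
qed

lemma B0_partial_sum_le_above_half:
  assumes IH: "\<And>N' z. N' < N \<Longrightarrow> brjuno01 z \<Longrightarrow> (\<Sum>j<N'. B0_term z j) \<le> 5 + 5 * brjunoB z"
    and z: "brjuno01 z" "1/2 < z"
  shows "(\<Sum>j<N. B0_term z j) \<le> 5 + 5 * brjunoB z"
proof -
  define x where "x = 1 - z"
  have bx: "brjuno01 x" unfolding x_def by (rule brjuno01_one_minus[OF z(1)])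
  note xf = brjuno01D[OF bx] and bg = brjuno01_gaussA[OF bx]
  interpret irrational_below_half x using xf z(2) unfolding x_def by unfold_locales auto
  have zx: "z = 1 - x" unfolding x_def by simp
  have Bx: "brjunoB x \<le> brjunoB z + 1/2"
    using abs_brjunoB_one_minus_diff_le[OF bx] unfolding zx by linarith
  have Phi: "\<bar>Phi x\<bar> \<le> 2" using Phi_bounds(1)[of x] xf z(2) unfolding x_def by simp
  have xB: "x * brjunoB (gaussA x) = brjunoB x - ln (1 / x)" using brjunoB_eq[OF bx] by simp
  have "x * ln (1 / gaussA x) \<le> x * brjunoB (gaussA x)"
    using ln_inverse_le_brjunoB[OF bg] xf by (intro mult_left_mono) auto
  have head_eq: "(\<Sum>j<n. B0_term z j) = x * ln (1 / gaussA x) - Phi x"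
    unfolding zx by (rule sum_B0_term_one_minus_head)
  hence head: "(\<Sum>j<n. B0_term z j) \<le> x * brjunoB (gaussA x) - Phi x"
    using \<open>x * ln (1 / gaussA x) \<le> _\<close> by simp
  show ?thesis
  proof (cases "N \<le> n")
    case True
    have "(\<Sum>j<N. B0_term z j) \<le> (\<Sum>j<n. B0_term z j)"
      using True by (intro sum_mono2) (auto intro: B0_term_nonneg)
    moreover have "0 \<le> ln (1 / x)" using xf by (intro ln_inverse_nonneg) auto
    moreover have "0 \<le> brjunoB z" using brjunoB_nonneg brjuno01D[OF z(1)] by simp
    ultimately show ?thesis using head Phi Bx xB unfolding abs_le_iff by linarith
  next
    case False
    then obtain N' where N': "N = n + Suc N'" by (metis add_Suc_right less_imp_Suc_add not_le)
    have "(\<Sum>i<Suc N'. B0_term z (n + i)) = x * ((\<Sum>i<Suc (Suc N'). B0_term (gaussA x) i) - ln (1 / gaussA x))"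
      unfolding zx B0_term_one_minus_tail sum.lessThan_Suc_shift[of _ "Suc N'"]
      using gaussA_facts by (simp add: B0_term_0 frac_eq sum_distrib_left distrib_left)
    also have "\<dots> \<le> x * (5 + 5 * brjunoB (gaussA x) - ln (1 / gaussA x))"
      using IH[of "Suc (Suc N')" "gaussA x"] N' n_facts(1) bg xf by (intro mult_left_mono) auto
    finally have "(\<Sum>j<N. B0_term z j) \<le> - Phi x + 5 * x + 5 * (brjunoB x - ln (1 / x))"
      using head_eq xB unfolding N' sum_lessThan_add by (simp add: algebra_simps)
    also have "\<dots> \<le> 5 + 5 * brjunoB z"
      using ln_le_minus_one[of x] Phi Bx xf below_half by (simp add: ln_div abs_le_iff)
    finally show ?thesis .
  qed
qed

lemma B0_partial_sum_le: "brjuno01 z \<Longrightarrow> (\<Sum>j<N. B0_term z j) \<le> 5 + 5 * brjunoB z"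
proof (induction N arbitrary: z rule: less_induct)
  case (less N)
  note z = brjuno01D[OF less.prems]
  have "z \<noteq> 1/2" using irrational_neq_half z by auto
  show ?case
  proof (cases "z < 1/2")
    case True
    show ?thesis
    proof (cases N)
      case 0 thus ?thesis using brjunoB_nonneg[of z] z by simp
    next
      case (Suc N')
      thus ?thesis using B0_partial_sum_le_below_half[OF less.IH less.prems True] by simp
    qed
  next
    case False
    thus ?thesis using B0_partial_sum_le_above_half[OF less.IH less.prems] \<open>z \<noteq> 1/2\<close> by simp
  qed
qed

lemma summable_B0_term: assumes "brjuno01 z" shows "summable (B0_term z)"
  using B0_partial_sum_le[OF assms] by (intro summableI_nonneg_bounded[OF B0_term_nonneg])

lemma brjunoB0_bounds: assumes "brjuno01 z" shows "0 \<le> brjunoB0 z" "brjunoB0 z \<le> 5 + 5 * brjunoB z"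
  unfolding brjunoB0_def using summable_B0_term[OF assms] B0_partial_sum_le[OF assms]
  by (auto intro: suminf_nonneg B0_term_nonneg suminf_le_const)

section \<open>The functional equation of \<open>\<Delta>\<^sup>-\<close>\<close>

lemma brjunoB0_eq: assumes "brjuno01 z" shows "brjunoB0 z = ln (1 / z) + z * brjunoB0 (1 - gaussA z)"
proof -
  have bw: "brjuno01 (1 - gaussA z)" by (rule brjuno01_one_minus[OF brjuno01_gaussA[OF assms]])
  note z = brjuno01D[OF assms] and w = brjuno01D[OF bw]
  have "(\<lambda>j. B0_term z (j + 1)) sums (z * brjunoB0 (1 - gaussA z))"
    using B0_term_Suc[of z] z w summable_B0_term[OF bw] unfolding brjunoB0_def
    by (simp add: gaussA0_eq sums_mult summable_sums)
  from sums_from_shift[OF this] show ?thesis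
    using z unfolding brjunoB0_def by (simp add: sums_iff B0_term_0 frac_eq add.commute)
qed

lemma brjunoB0_one_minus_eq:
  assumes "brjuno01 z" "z < 1/2" shows "brjunoB0 (1 - z) = z * brjunoB0 (gaussA z) - Phi z"
proof -
  interpret irrational_below_half z using brjuno01D[OF assms(1)] assms(2) by unfold_locales auto
  show ?thesis using B0_term_one_minus_sums summable_B0_term[OF brjuno01_gaussA[OF assms(1)]]
    unfolding brjunoB0_def by (simp add: sums_iff)
qed

lemma w0_eq_wiltonW: assumes "brjuno01 z" "z < 1/2" shows "w0 z = (wiltonW z + wiltonW (1 - z)) / 2"
  using brjuno01D[OF assms(1)] unfolding wiltonW_one_minus_eq[OF assms] wiltonW_eq[OF assms(1)] w0_def
  by (simp add: ln_div field_simps)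

lemma w_fun_eq_wiltonW: assumes "brjuno01 u" shows "w_fun u = (wiltonW u + wiltonW (1 - u)) / 2"
proof -
  have u: "0 < u" "u < 1" "u \<noteq> 1/2" using brjuno01D[OF assms] irrational_neq_half by auto
  show ?thesis
  proof (cases "u < 1/2")
    case True thus ?thesis using w_fun_eq_w0[of u] w0_eq_wiltonW[OF assms] u by simp
  next
    case False
    hence "w_fun u = w0 (1 - u)" unfolding w_fun_def using u by (simp add: frac_eq)
    thus ?thesis using w0_eq_wiltonW[OF brjuno01_one_minus[OF assms]] False u by simp
  qed
qed

lemma Delta_minus_functional_eq:
  assumes "brjuno01 z" "z < 1/2" shows "Delta_minus z = f_fun z - z * Delta_minus (gaussA z)"
proof -
  have bu: "brjuno01 (gaussA z)" by (rule brjuno01_gaussA[OF assms(1)])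
  have z: "0 < z" "z < 1" and u: "0 < gaussA z" "gaussA z < 1"
    using brjuno01D[OF assms(1)] brjuno01D[OF bu] by auto
  have wz: "w_fun z = w0 z" using w_fun_eq_w0[of z] z assms(2) by simp
  show ?thesis
    unfolding Delta_minus_unit[OF z] Delta_minus_unit[OF u] f_fun_def wz w0_eq_wiltonW[OF assms]
      w_fun_eq_wiltonW[OF bu] wiltonW_one_minus_eq[OF assms] wiltonW_eq[OF assms(1)]
      brjunoB0_eq[OF assms(1)] brjunoB0_one_minus_eq[OF assms]
    using z by (simp add: ln_div field_simps)
qed

lemma abs_Delta_minus_le: assumes "brjuno01 z" "z < 1/2" shows "\<bar>Delta_minus z\<bar> \<le> 13 + 13 * brjunoB z"
proof -
  have b1: "brjuno01 (1 - z)" by (rule brjuno01_one_minus[OF assms(1)])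
  note z = brjuno01D[OF assms(1)]
  have e: "Delta_minus z = wiltonW z / 2 - wiltonW (1 - z) / 2 - brjunoB0 z + brjunoB0 (1 - z)"
    using z by (simp add: Delta_minus_unit field_simps)
  have "\<bar>wiltonW z\<bar> \<le> brjunoB z" "\<bar>wiltonW (1 - z)\<bar> \<le> brjunoB (1 - z)"
    using summable_W_term(2) z brjuno01D[OF b1] by auto
  moreover have "brjunoB (1 - z) \<le> brjunoB z + 1/2"
    using abs_brjunoB_one_minus_diff_le[OF assms(1)] by linarith
  moreover note brjunoB0_bounds[OF assms(1)] brjunoB0_bounds[OF b1]
  moreover have "0 \<le> brjunoB z" using brjunoB_nonneg z by simp
  ultimately have "Delta_minus z \<le> 13 + 13 * brjunoB z" "- Delta_minus z \<le> 13 + 13 * brjunoB z"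
    unfolding e abs_le_iff by linarith+
  thus ?thesis by simp
qed

text \<open>The same equation on the signed orbit: \<open>nicf_step\<close> differs from \<open>gaussA\<close> by an integer and
  \<open>\<Delta>\<^sup>-\<close> is odd and 1-periodic.\<close>

lemma Delta_minus_functional_eq_signed:
  assumes "0 < \<bar>y\<bar>" "\<bar>y\<bar> < 1/2" "brjuno01 \<bar>y\<bar>"
  shows "Delta_minus y = f_tilde y - y * Delta_minus (nicf_step y)"
proof -
  have "Delta_minus (nicf_step \<bar>y\<bar>) = Delta_minus (gaussA \<bar>y\<bar>)"
    using Delta_minus_add_of_int[of "gaussA \<bar>y\<bar>" "\<lfloor>1 / \<bar>y\<bar>\<rfloor> - round (1 / \<bar>y\<bar>)"] assms(1)
    by (simp add: nicf_step_pos gaussA_def)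
  hence "Delta_minus \<bar>y\<bar> = f_tilde \<bar>y\<bar> - \<bar>y\<bar> * Delta_minus (nicf_step \<bar>y\<bar>)"
    using Delta_minus_functional_eq[OF assms(3,2)] f_tilde_eq_f_fun[of "\<bar>y\<bar>"] assms(2) by simp
  thus ?thesis
    by (cases "0 \<le> y") (auto simp: Delta_minus_minus f_tilde_minus nicf_step_def)
qed

section \<open>Convergence of the series to \<open>\<Delta>\<^sup>-\<close>\<close>

lemma gaussA_above_half:
  assumes "1/2 < g" "g < 1" shows "gaussA (1 - g) = gaussA (gaussA g)" "g * gaussA g = 1 - g"
proof -
  have "\<lfloor>1 / g\<rfloor> = 1" using assms by (intro floor_unique) (auto simp: field_simps)
  hence ga: "gaussA g = 1 / g - 1" unfolding gaussA_def by simp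
  show "g * gaussA g = 1 - g" unfolding ga using assms by (simp add: field_simps)
  have "1 / gaussA g = 1 / (1 - g) + of_int (-1)" unfolding ga using assms by (simp add: field_simps)
  thus "gaussA (1 - g) = gaussA (gaussA g)" unfolding gaussA_eq_frac by (simp add: frac_def)
qed

locale brjuno_below_half =
  fixes x :: real
  assumes brjuno: "brjuno01 x" and below_half: "x < 1/2"
begin

definition gauss_orbit :: "nat \<Rightarrow> real" where "gauss_orbit k = (gaussA ^^ k) x"

lemma gauss_orbit_Suc: "gauss_orbit (Suc k) = gaussA (gauss_orbit k)"
  unfolding gauss_orbit_def by simp

lemma brjuno01_gauss_orbit: "brjuno01 (gauss_orbit k)"
  by (induction k) (auto simp: gauss_orbit_def brjuno intro: brjuno01_gaussA)

text \<open>A nearest-integer step is one Gauss step, or two when the Gauss iterate exceeds \<open>1/2\<close>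
  (then \<open>x\<^sub>k\<close> is \<open>1 - g\<close> and the extra factor \<open>g\<close> reappears in the product).\<close>

lemma nicf_orbit_vs_gauss_orbit:
  "\<exists>K\<ge>N. (\<Prod>k<N. \<bar>nicf_orbit x k\<bar>) = (\<Prod>k<K. gauss_orbit k)
     \<and> (\<bar>nicf_orbit x N\<bar> = gauss_orbit K \<or> (\<bar>nicf_orbit x N\<bar> = 1 - gauss_orbit K \<and> 1/2 < gauss_orbit K))"
proof (induction N)
  case 0 thus ?case using brjuno01D[OF brjuno] by (intro exI[of _ 0]) (simp add: gauss_orbit_def)
next
  case (Suc N)
  then obtain K where K: "K \<ge> N" "(\<Prod>k<N. \<bar>nicf_orbit x k\<bar>) = (\<Prod>k<K. gauss_orbit k)"
    "\<bar>nicf_orbit x N\<bar> = gauss_orbit K \<or> (\<bar>nicf_orbit x N\<bar> = 1 - gauss_orbit K \<and> 1/2 < gauss_orbit K)"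
    by blast
  have step: "\<bar>nicf_orbit x (Suc N)\<bar> = (if gaussA g < 1/2 then gaussA g else 1 - gaussA g)"
    if "\<bar>nicf_orbit x N\<bar> = g" for g
    using that unfolding nicf_orbit_Suc' nicf_step_def abs_round_rem_eq_frac gaussA_eq_frac by simp
  have next_ok: "(if gaussA (gauss_orbit K') < 1/2 then gaussA (gauss_orbit K') else 1 - gaussA (gauss_orbit K'))
      = gauss_orbit (Suc K') \<or> ((if gaussA (gauss_orbit K') < 1/2 then gaussA (gauss_orbit K')
      else 1 - gaussA (gauss_orbit K')) = 1 - gauss_orbit (Suc K') \<and> 1/2 < gauss_orbit (Suc K'))" for K'
  proof -
    have "gauss_orbit (Suc K') \<noteq> 1/2"
      using brjuno01D[OF brjuno01_gauss_orbit[of "Suc K'"]] irrational_neq_half by auto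
    thus ?thesis unfolding gauss_orbit_Suc by auto
  qed
  have gK: "0 < gauss_orbit K" "gauss_orbit K < 1" using brjuno01D[OF brjuno01_gauss_orbit[of K]] by auto
  from K(3) show ?case
  proof
    assume y: "\<bar>nicf_orbit x N\<bar> = gauss_orbit K"
    have "\<bar>nicf_orbit x (Suc N)\<bar> = (if gaussA (gauss_orbit K) < 1/2 then gaussA (gauss_orbit K)
        else 1 - gaussA (gauss_orbit K))"
      using step y by simp
    thus ?case using next_ok[of K] K(1,2) y by (intro exI[of _ "Suc K"]) auto
  next
    assume y: "\<bar>nicf_orbit x N\<bar> = 1 - gauss_orbit K \<and> 1/2 < gauss_orbit K"
    note e = gaussA_above_half[of "gauss_orbit K"]
    have "\<bar>nicf_orbit x (Suc N)\<bar> = (if gaussA (gauss_orbit (Suc K)) < 1/2 then gaussA (gauss_orbit (Suc K))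
        else 1 - gaussA (gauss_orbit (Suc K)))"
      using step y gK e by (simp add: gauss_orbit_Suc)
    moreover have "(\<Prod>k<Suc N. \<bar>nicf_orbit x k\<bar>) = (\<Prod>k<Suc (Suc K). gauss_orbit k)"
      using K(2) y e gK by (simp add: gauss_orbit_Suc)
    ultimately show ?case using next_ok[of "Suc K"] K(1) by (intro exI[of _ "Suc (Suc K)"]) auto
  qed
qed

lemma brjuno01_nicf_orbit: "brjuno01 \<bar>nicf_orbit x N\<bar> \<and> \<bar>nicf_orbit x N\<bar> < 1/2"
proof -
  obtain K where "\<bar>nicf_orbit x N\<bar> = gauss_orbit K \<or> (\<bar>nicf_orbit x N\<bar> = 1 - gauss_orbit K)"
    using nicf_orbit_vs_gauss_orbit[of N] by blast
  hence b: "brjuno01 \<bar>nicf_orbit x N\<bar>" using brjuno01_gauss_orbit[of K] brjuno01_one_minus by auto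
  have "\<bar>nicf_orbit x N\<bar> \<le> 1/2"
    using abs_nicf_step_le below_half brjuno01D[OF brjuno] by (cases N) (simp_all add: nicf_orbit_Suc')
  moreover have "\<bar>nicf_orbit x N\<bar> \<noteq> 1/2" using brjuno01D[OF b] irrational_neq_half by auto
  ultimately show ?thesis using b by simp
qed

lemma brjunoB_split: "brjunoB x = (\<Prod>k<K. gauss_orbit k) * brjunoB (gauss_orbit K) + (\<Sum>j<K. B_term x j)"
proof -
  have tail: "B_term x (j + K) = (\<Prod>k<K. gauss_orbit k) * B_term (gauss_orbit K) j" for j
  proof (induction K arbitrary: j)
    case 0 thus ?case by (simp add: gauss_orbit_def)
  next
    case (Suc K)
    have "0 \<le> gauss_orbit K" "gauss_orbit K < 1" using brjuno01D[OF brjuno01_gauss_orbit[of K]] by auto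
    thus ?case using Suc.IH[of "Suc j"] B_term_Suc[of "gauss_orbit K" j] by (simp add: gauss_orbit_Suc)
  qed
  have "(\<lambda>j. B_term x (j + K)) sums ((\<Prod>k<K. gauss_orbit k) * brjunoB (gauss_orbit K))"
    unfolding tail brjunoB_def using brjuno01D[OF brjuno01_gauss_orbit[of K]]
    by (intro sums_mult summable_sums) simp
  from sums_from_shift[OF this] show ?thesis unfolding brjunoB_def by (simp add: sums_iff)
qed

definition B_tail :: "nat \<Rightarrow> real" where "B_tail N = brjunoB x - (\<Sum>j<N. B_term x j)"

lemma B_tail_tendsto_0: "B_tail \<longlonglongrightarrow> 0"
proof -
  have "(\<lambda>N. \<Sum>j<N. B_term x j) \<longlonglongrightarrow> brjunoB x"
    unfolding brjunoB_def using brjuno01D[OF brjuno] by (intro summable_LIMSEQ) simp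
  from tendsto_diff[OF tendsto_const[of "brjunoB x"] this] show ?thesis unfolding B_tail_def by simp
qed

lemma B_tail_antimono: "N \<le> K \<Longrightarrow> B_tail K \<le> B_tail N"
  unfolding B_tail_def by (simp add: sum_mono2 B_term_nonneg)

text \<open>The remainder after \<open>N\<close> terms of the series is \<open>\<plusminus>\<beta>\<^sub>N\<^sub>-\<^sub>1 \<Delta>\<^sup>-(\<epsilon>\<^sub>N x\<^sub>N)\<close>; it tends to \<open>0\<close>
  because \<open>\<beta>\<^sub>N\<^sub>-\<^sub>1 B(x\<^sub>N)\<close> is, up to \<open>O(2\<^sup>-\<^sup>N)\<close>, a tail of the Brjuno series of \<open>x\<close>.\<close>

definition remainder :: "nat \<Rightarrow> real" where
  "remainder N = (\<Prod>k<N. nicf_orbit x k) * Delta_minus (nicf_orbit x N)"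

lemma abs_remainder_le: "\<bar>remainder N\<bar> \<le> 39/2 * (1/2) ^ N + 13 * B_tail N"
proof -
  obtain K where K: "K \<ge> N" "(\<Prod>k<N. \<bar>nicf_orbit x k\<bar>) = (\<Prod>k<K. gauss_orbit k)"
    "\<bar>nicf_orbit x N\<bar> = gauss_orbit K \<or> \<bar>nicf_orbit x N\<bar> = 1 - gauss_orbit K"
    using nicf_orbit_vs_gauss_orbit[of N] by blast
  define P where "P = (\<Prod>k<K. gauss_orbit k)"
  have P0: "0 \<le> P" unfolding P_def using brjuno01_gauss_orbit brjuno01D
    by (intro prod_nonneg) (auto intro: less_imp_le)
  have "P \<le> (1/2) ^ N"
    using abs_prod_nicf_orbit_le[of x N] K(2) brjuno01D[OF brjuno] below_half unfolding P_def abs_prod by simp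
  have "\<bar>Delta_minus (nicf_orbit x N)\<bar> = \<bar>Delta_minus \<bar>nicf_orbit x N\<bar>\<bar>"
    by (cases "nicf_orbit x N \<ge> 0") (simp_all add: Delta_minus_minus)
  also have "\<dots> \<le> 13 + 13 * brjunoB \<bar>nicf_orbit x N\<bar>"
    using brjuno01_nicf_orbit by (intro abs_Delta_minus_le) auto
  also have "\<dots> \<le> 39/2 + 13 * brjunoB (gauss_orbit K)"
    using K(3) abs_brjunoB_one_minus_diff_le[OF brjuno01_gauss_orbit[of K]] unfolding abs_le_iff by auto
  finally have D: "\<bar>Delta_minus (nicf_orbit x N)\<bar> \<le> 39/2 + 13 * brjunoB (gauss_orbit K)" .
  have "\<bar>remainder N\<bar> = P * \<bar>Delta_minus (nicf_orbit x N)\<bar>"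
    unfolding remainder_def P_def K(2)[symmetric] abs_mult abs_prod ..
  also have "\<dots> \<le> P * (39/2 + 13 * brjunoB (gauss_orbit K))" using D P0 by (rule mult_left_mono)
  also have "\<dots> = 39/2 * P + 13 * B_tail K"
    using brjunoB_split[of K] unfolding B_tail_def P_def by (simp add: algebra_simps)
  also have "\<dots> \<le> 39/2 * (1/2) ^ N + 13 * B_tail N"
    using \<open>P \<le> (1/2) ^ N\<close> B_tail_antimono[OF K(1)] by simp
  finally show ?thesis .
qed

lemma remainder_tendsto_0: "remainder \<longlonglongrightarrow> 0"
proof (rule Lim_null_comparison)
  show "\<forall>\<^sub>F N in sequentially. norm (remainder N) \<le> 39/2 * (1/2) ^ N + 13 * B_tail N"
    using abs_remainder_le by simp
  have "(\<lambda>N. 39/2 * (1/2::real) ^ N + 13 * B_tail N) \<longlonglongrightarrow> 39/2 * 0 + 13 * 0"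
    by (intro tendsto_intros B_tail_tendsto_0 LIMSEQ_power_zero) simp
  thus "(\<lambda>N. 39/2 * (1/2::real) ^ N + 13 * B_tail N) \<longlonglongrightarrow> 0" by simp
qed

lemma Delta_minus_minus_partial_sum: "Delta_minus x - (\<Sum>i<N. dterm x i) = (-1) ^ N * remainder N"
proof (induction N)
  case 0 thus ?case unfolding remainder_def by simp
next
  case (Suc N)
  have "0 < \<bar>nicf_orbit x N\<bar>" using brjuno01D brjuno01_nicf_orbit by blast
  hence fe: "Delta_minus (nicf_orbit x N)
      = f_tilde (nicf_orbit x N) - nicf_orbit x N * Delta_minus (nicf_orbit x (Suc N))"
    unfolding nicf_orbit_Suc' using brjuno01_nicf_orbit by (intro Delta_minus_functional_eq_signed) auto
  have "Delta_minus x - (\<Sum>i<Suc N. dterm x i) = (-1) ^ N * remainder N - dterm x N" using Suc by simp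
  also have "\<dots> = (-1) ^ Suc N * remainder (Suc N)"
    using brjuno01D[OF brjuno] unfolding remainder_def fe by (simp add: dterm_eq_nicf_orbit algebra_simps)
  finally show ?case .
qed

lemma dterm_sums: "dterm x sums Delta_minus x"
proof -
  have "(\<lambda>N. (-1) ^ N * remainder N) \<longlonglongrightarrow> 0"
  proof (rule Lim_null_comparison)
    show "\<forall>\<^sub>F N in sequentially. norm ((-1) ^ N * remainder N) \<le> \<bar>remainder N\<bar>"
      by (simp add: abs_mult)
    show "(\<lambda>N. \<bar>remainder N\<bar>) \<longlonglongrightarrow> 0" using tendsto_rabs[OF remainder_tendsto_0] by simp
  qed
  hence "(\<lambda>N. Delta_minus x - (Delta_minus x - (\<Sum>i<N. dterm x i))) \<longlonglongrightarrow> Delta_minus x - 0"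
    unfolding Delta_minus_minus_partial_sum by (intro tendsto_diff tendsto_const)
  thus ?thesis unfolding sums_def by simp
qed

end

theorem mainTheorem7:
  shows "(\<forall>x. brjuno x \<and> 0 < x \<and> x < 1/2 \<longrightarrow> (dterm x) sums (Delta_minus x))
    \<and> uniformly_convergent_on ({0<..<1/2} - \<rat>) (\<lambda>n x. \<Sum>i<n. dterm x i)
    \<and> (\<forall>M::nat. M \<ge> 1 \<longrightarrow>
         continuous_on ({0<..<1/2} - \<rat>) (DeltaM M)
       \<and> (\<forall>r\<in>\<rat>. 0 < r \<and> r < 1/2 \<and> nicf_depth r > M \<longrightarrow>
            (\<exists>L. (DeltaM M \<longlongrightarrow> L) (at r within ({0<..<1/2} - \<rat>))))
       \<and> (\<forall>(p::int) (q::int). 0 < q \<and> coprime p q \<and> 0 < real_of_int p / of_int q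
            \<and> real_of_int p / of_int q < 1/2 \<and> nicf_depth (real_of_int p / of_int q) \<le> M \<longrightarrow>
            (\<exists>Lp Lm.
               (DeltaM M \<longlongrightarrow> Lp) (at (real_of_int p / of_int q) within (({0<..<1/2} - \<rat>) \<inter> {real_of_int p / of_int q<..}))
             \<and> (DeltaM M \<longlongrightarrow> Lm) (at (real_of_int p / of_int q) within (({0<..<1/2} - \<rat>) \<inter> {..<real_of_int p / of_int q}))
             \<and> Lp - Lm = 2 / real_of_int q)))"
proof (intro conjI allI impI ballI)
  fix x :: real assume "brjuno x \<and> 0 < x \<and> x < 1/2"
  then interpret brjuno_below_half x by unfold_locales (auto simp: brjuno01_def)
  show "dterm x sums Delta_minus x" by (rule dterm_sums)
next
  show "uniformly_convergent_on ({0<..<1/2} - \<rat>) (\<lambda>n x. \<Sum>i<n. dterm x i)"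
    by (rule uniformly_convergent_dterm)
next
  fix M :: nat
  show "continuous_on ({0<..<1/2} - \<rat>) (DeltaM M)" by (rule continuous_on_DeltaM)
  show "\<exists>L. (DeltaM M \<longlongrightarrow> L) (at r within ({0<..<1/2} - \<rat>))"
    if "r \<in> \<rat>" "0 < r \<and> r < 1/2 \<and> M < nicf_depth r" for r
    using that by (intro DeltaM_tendsto_deep_rational) auto
  show "\<exists>Lp Lm.
      (DeltaM M \<longlongrightarrow> Lp) (at (real_of_int p / of_int q) within (({0<..<1/2} - \<rat>) \<inter> {real_of_int p / of_int q<..}))
    \<and> (DeltaM M \<longlongrightarrow> Lm) (at (real_of_int p / of_int q) within (({0<..<1/2} - \<rat>) \<inter> {..<real_of_int p / of_int q}))
    \<and> Lp - Lm = 2 / real_of_int q"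
    if "0 < q \<and> coprime p q \<and> 0 < real_of_int p / of_int q \<and> real_of_int p / of_int q < 1/2
      \<and> nicf_depth (real_of_int p / of_int q) \<le> M" for p q :: int
    using that by (intro DeltaM_jump_rational) auto
qed
end
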